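(* Let $T$ be a complete first-order theory in a countable language with an uncountable atomic model. (1) If $\theta(\mathbf z;\mathbf x)$ is extendible, then for any countable atomic model $M$ and any $\mathbf b\in M^{\lg(\mathbf z)}$, $\mathbf a\in M^{\lg(\mathbf x)}$ with $M\models\theta(\mathbf b,\mathbf a)$, there is $M_0\preceq M$ such that $\mathbf b\subseteq M_0$ and $\mathbf a\subseteq M\setminus M_0$. (2) If $\theta(\mathbf z;\mathbf x)$ is extendible and $\mathbf z'\subseteq\mathbf z$, $\mathbf x'\subseteq\mathbf x$, then the restriction $\theta\restriction_{\mathbf z';\mathbf x'}$ is extendible. (3) A complete formula $\theta(\mathbf z;\mathbf x)$ is extendible if and only if $\theta\restriction_{\mathbf z,x_i}$ is not pseudo-algebraic for every variable $x_i$ in $\mathbf x$.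
   Context: A complete formula is one isolating a complete type over $\emptyset$ (realized in an atomic set). For a complete formula $\theta(\mathbf w)$ and a subsequence $\mathbf v$ of $\mathbf w$, $\theta\restriction_{\mathbf v}$ denotes the complete formula equivalent to $\exists\mathbf u\,\theta(\mathbf v,\mathbf u)$, where $\mathbf u$ are the remaining variables. A complete formula $\theta(\mathbf z;\mathbf x)$ with the displayed partition of its free variables is extendible if there are countable atomic models $M\preceq N$ and tuples $\mathbf b\subseteq M$, $\mathbf a\subseteq N\setminus M$ (every coordinate of $\mathbf a$ outside $M$) with $N\models\theta(\mathbf b,\mathbf a)$. A complete formula $\phi(x,\mathbf a)$ in one variable $x$ is pseudo-algebraic if for some/any countable atomic $M$ containing $\mathbf a$ and any atomic $N\succeq M$ with $N\neq M$, $\phi(N,\mathbf a)=\phi(M,\mathbf a)$; a complete formula $\theta(\mathbf z,x_i)$ is called pseudo-algebraic (as a formula in $x_i$) if $\theta(\mathbf b,x_i)$ is pseudo-algebraic for a (any) $\mathbf b$ realizing $\theta\restriction_{\mathbf z}$. *)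

theory Defs
  imports Main "HOL-Library.Countable_Set" "HOL-Library.Sublist"
begin

text \<open>Function symbols of type 'f, relation symbols of type 'r (both countable types).
  A language assigns arities; symbols with arity None are not in the language.\<close>

datatype 'f trm = Var nat | Fn 'f "'f trm list"

datatype ('f, 'r) fm =
    Eq "'f trm" "'f trm"
  | Rel 'r "'f trm list"
  | Neg "('f, 'r) fm"
  | Conj "('f, 'r) fm" "('f, 'r) fm"
  | Ex nat "('f, 'r) fm"

type_synonym ('f, 'r) lang = "('f \<Rightarrow> nat option) \<times> ('r \<Rightarrow> nat option)"

fun wf_trm :: "('f, 'r) lang \<Rightarrow> 'f trm \<Rightarrow> bool" where
  "wf_trm L (Var n) = True"
| "wf_trm L (Fn f ts) = (fst L f = Some (length ts) \<and> (\<forall>t\<in>set ts. wf_trm L t))"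

fun wf_fm :: "('f, 'r) lang \<Rightarrow> ('f, 'r) fm \<Rightarrow> bool" where
  "wf_fm L (Eq t u) = (wf_trm L t \<and> wf_trm L u)"
| "wf_fm L (Rel r ts) = (snd L r = Some (length ts) \<and> (\<forall>t\<in>set ts. wf_trm L t))"
| "wf_fm L (Neg \<phi>) = wf_fm L \<phi>"
| "wf_fm L (Conj \<phi> \<psi>) = (wf_fm L \<phi> \<and> wf_fm L \<psi>)"
| "wf_fm L (Ex n \<phi>) = wf_fm L \<phi>"

fun fv_trm :: "'f trm \<Rightarrow> nat set" where
  "fv_trm (Var n) = {n}"
| "fv_trm (Fn f ts) = (\<Union>t\<in>set ts. fv_trm t)"

fun fv_fm :: "('f, 'r) fm \<Rightarrow> nat set" where
  "fv_fm (Eq t u) = fv_trm t \<union> fv_trm u"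
| "fv_fm (Rel r ts) = (\<Union>t\<in>set ts. fv_trm t)"
| "fv_fm (Neg \<phi>) = fv_fm \<phi>"
| "fv_fm (Conj \<phi> \<psi>) = fv_fm \<phi> \<union> fv_fm \<psi>"
| "fv_fm (Ex n \<phi>) = fv_fm \<phi> - {n}"

definition sentence :: "('f, 'r) lang \<Rightarrow> ('f, 'r) fm \<Rightarrow> bool" where
  "sentence L \<phi> \<longleftrightarrow> wf_fm L \<phi> \<and> fv_fm \<phi> = {}"

text \<open>Iterated existential quantification and restriction of a formula
  (\<open>\<theta>\<restriction>\<^sub>v\<close> = \<open>\<exists>u \<theta>\<close>, u the variables of w not in v).\<close>

fun exs :: "nat list \<Rightarrow> ('f, 'r) fm \<Rightarrow> ('f, 'r) fm" where
  "exs [] \<phi> = \<phi>"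
| "exs (v # vs) \<phi> = Ex v (exs vs \<phi>)"

definition restr :: "nat list \<Rightarrow> nat list \<Rightarrow> ('f, 'r) fm \<Rightarrow> ('f, 'r) fm" where
  "restr w v \<theta> = exs (filter (\<lambda>y. y \<notin> set v) w) \<theta>"

record ('a, 'f, 'r) struct =
  udom :: "'a set"
  fint :: "'f \<Rightarrow> 'a list \<Rightarrow> 'a"
  rint :: "'r \<Rightarrow> 'a list \<Rightarrow> bool"

fun evalt :: "('f \<Rightarrow> 'a list \<Rightarrow> 'a) \<Rightarrow> (nat \<Rightarrow> 'a) \<Rightarrow> 'f trm \<Rightarrow> 'a" where
  "evalt F s (Var n) = s n"
| "evalt F s (Fn f ts) = F f (map (evalt F s) ts)"

fun sat :: "('a, 'f, 'r) struct \<Rightarrow> (nat \<Rightarrow> 'a) \<Rightarrow> ('f, 'r) fm \<Rightarrow> bool" where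
  "sat M s (Eq t u) = (evalt (fint M) s t = evalt (fint M) s u)"
| "sat M s (Rel r ts) = rint M r (map (evalt (fint M) s) ts)"
| "sat M s (Neg \<phi>) = (\<not> sat M s \<phi>)"
| "sat M s (Conj \<phi> \<psi>) = (sat M s \<phi> \<and> sat M s \<psi>)"
| "sat M s (Ex n \<phi>) = (\<exists>a\<in>udom M. sat M (s(n := a)) \<phi>)"

definition is_struct :: "('f, 'r) lang \<Rightarrow> ('a, 'f, 'r) struct \<Rightarrow> bool" where
  "is_struct L M \<longleftrightarrow> udom M \<noteq> {} \<and>
     (\<forall>f n as. fst L f = Some n \<and> length as = n \<and> set as \<subseteq> udom M \<longrightarrow> fint M f as \<in> udom M)"

definition elem_sub :: "('f, 'r) lang \<Rightarrow> ('a, 'f, 'r) struct \<Rightarrow> ('a, 'f, 'r) struct \<Rightarrow> bool" where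
  "elem_sub L M N \<longleftrightarrow> is_struct L M \<and> is_struct L N \<and> udom M \<subseteq> udom N \<and>
     (\<forall>f n as. fst L f = Some n \<and> length as = n \<and> set as \<subseteq> udom M \<longrightarrow> fint M f as = fint N f as) \<and>
     (\<forall>r n as. snd L r = Some n \<and> length as = n \<and> set as \<subseteq> udom M \<longrightarrow> rint M r as = rint N r as) \<and>
     (\<forall>\<phi> s. wf_fm L \<phi> \<and> range s \<subseteq> udom M \<longrightarrow> (sat M s \<phi> \<longleftrightarrow> sat N s \<phi>))"

definition models :: "('f, 'r) lang \<Rightarrow> ('f, 'r) fm set \<Rightarrow> ('a, 'f, 'r) struct \<Rightarrow> bool" where
  "models L T M \<longleftrightarrow> is_struct L M \<and> (\<forall>\<phi>\<in>T. \<forall>s. range s \<subseteq> udom M \<longrightarrow> sat M s \<phi>)"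

text \<open>Semantic notions relative to all models of T whose universe lies in the type 'a.\<close>

definition complete_theory :: "'a itself \<Rightarrow> ('f, 'r) lang \<Rightarrow> ('f, 'r) fm set \<Rightarrow> bool" where
  "complete_theory (U :: 'a itself) L T \<longleftrightarrow> (\<forall>\<phi>\<in>T. sentence L \<phi>) \<and>
     (\<exists>M :: ('a, 'f, 'r) struct. models L T M) \<and>
     (\<forall>\<phi>. sentence L \<phi> \<longrightarrow>
        (\<forall>(M :: ('a, 'f, 'r) struct) s. models L T M \<and> range s \<subseteq> udom M \<longrightarrow> sat M s \<phi>) \<or>
        (\<forall>(M :: ('a, 'f, 'r) struct) s. models L T M \<and> range s \<subseteq> udom M \<longrightarrow> \<not> sat M s \<phi>))"

definition complete_fm :: "'a itself \<Rightarrow> ('f, 'r) lang \<Rightarrow> ('f, 'r) fm set \<Rightarrow> nat list \<Rightarrow> ('f, 'r) fm \<Rightarrow> bool" where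
  "complete_fm (U :: 'a itself) L T w \<theta> \<longleftrightarrow> wf_fm L \<theta> \<and> fv_fm \<theta> \<subseteq> set w \<and>
     (\<exists>(M :: ('a, 'f, 'r) struct) s. models L T M \<and> range s \<subseteq> udom M \<and> sat M s \<theta>) \<and>
     (\<forall>\<psi>. wf_fm L \<psi> \<and> fv_fm \<psi> \<subseteq> set w \<longrightarrow>
        (\<forall>(M :: ('a, 'f, 'r) struct) s. models L T M \<and> range s \<subseteq> udom M \<and> sat M s \<theta> \<longrightarrow> sat M s \<psi>) \<or>
        (\<forall>(M :: ('a, 'f, 'r) struct) s. models L T M \<and> range s \<subseteq> udom M \<and> sat M s \<theta> \<longrightarrow> \<not> sat M s \<psi>))"

definition atomic_model :: "('f, 'r) lang \<Rightarrow> ('f, 'r) fm set \<Rightarrow> ('a, 'f, 'r) struct \<Rightarrow> bool" where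
  "atomic_model L T M \<longleftrightarrow> models L T M \<and>
     (\<forall>w s. distinct w \<and> range s \<subseteq> udom M \<longrightarrow>
        (\<exists>\<theta>. complete_fm TYPE('a) L T w \<theta> \<and> sat M s \<theta>))"

definition cam :: "('f, 'r) lang \<Rightarrow> ('f, 'r) fm set \<Rightarrow> ('a, 'f, 'r) struct \<Rightarrow> bool" where
  "cam L T M \<longleftrightarrow> atomic_model L T M \<and> countable (udom M)"

definition partition_ok :: "nat list \<Rightarrow> nat list \<Rightarrow> ('f, 'r) fm \<Rightarrow> bool" where
  "partition_ok z x \<theta> \<longleftrightarrow> distinct (z @ x) \<and> fv_fm \<theta> \<subseteq> set (z @ x)"

definition extendible :: "'a itself \<Rightarrow> ('f, 'r) lang \<Rightarrow> ('f, 'r) fm set \<Rightarrow> nat list \<Rightarrow> nat list \<Rightarrow> ('f, 'r) fm \<Rightarrow> bool" where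
  "extendible (U :: 'a itself) L T z x \<theta> \<longleftrightarrow>
     (\<exists>(M :: ('a, 'f, 'r) struct) N s. cam L T M \<and> cam L T N \<and> elem_sub L M N \<and>
        range s \<subseteq> udom N \<and> s ` set z \<subseteq> udom M \<and> s ` set x \<inter> udom M = {} \<and> sat N s \<theta>)"

definition pseudo_alg :: "'a itself \<Rightarrow> ('f, 'r) lang \<Rightarrow> ('f, 'r) fm set \<Rightarrow> nat list \<Rightarrow> nat \<Rightarrow> ('f, 'r) fm \<Rightarrow> bool" where
  "pseudo_alg (U :: 'a itself) L T z y \<theta> \<longleftrightarrow>
     (\<exists>(M :: ('a, 'f, 'r) struct) s. cam L T M \<and> range s \<subseteq> udom M \<and> sat M s (Ex y \<theta>) \<and>
        (\<forall>N :: ('a, 'f, 'r) struct. atomic_model L T N \<and> elem_sub L M N \<and> udom N \<noteq> udom M \<longrightarrow>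
           {c \<in> udom N. sat N (s(y := c)) \<theta>} = {c \<in> udom M. sat M (s(y := c)) \<theta>}))"

end

theory Submission
  imports Defs
begin

text \<open>Three tools about countable atomic models carry the proof.
  \<^item> Forth: a countable atomic model \<open>A\<close> embeds elementarily into every model of \<open>T\<close> over a finite
    tuple of the same type, and by Tarski-Vaught the image of an elementary submodel of \<open>A\<close> is an
    elementary submodel of the target.
  \<^item> Pull-back: if \<open>f : M \<rightarrow> M'\<close> is elementary and \<open>M' \<preceq> N'\<close>, an isomorphic copy of \<open>N'\<close>
    that inverts \<open>f\<close> and sends \<open>N' - M'\<close> to fresh elements is an atomic elementary extension of
    \<open>M\<close>. Fresh elements exist because the universe type is uncountable; apart from providing an
    atomic model, this is all the uncountable atomic model is used for.
  \<^item> Downward Loewenheim-Skolem.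

  For (1), embed the countable \<open>N'\<close> witnessing extendibility into \<open>M\<close> over the tuple: the image of
  \<open>M'\<close> contains \<open>b\<close> but not \<open>a\<close>. (2) is immediate. For (3), if the restriction of \<open>\<theta>\<close> to
  \<open>(z, x\<^sub>i)\<close> were pseudo-algebraic, witnessed by \<open>M\<close> and \<open>b\<close>, embed \<open>M\<close> into \<open>M'\<close> over \<open>b\<close> and
  pull \<open>N'\<close> back: the copy of \<open>a\<^sub>i\<close> is a new realization outside \<open>M\<close>. Conversely, realize
  \<open>\<theta>(b, a)\<close> in a countable atomic model and remove the \<open>a\<^sub>i\<close> one at a time. If \<open>a\<^sub>i\<close> lies in the
  current model \<open>M\<^sub>1\<close>, non-pseudo-algebraicity gives a realization \<open>c \<notin> M\<^sub>1\<close> in an atomic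
  extension; embedding a countable elementary submodel containing \<open>M\<^sub>1\<close> and \<open>c\<close> into \<open>M\<^sub>1\<close> over
  \<open>(b, c) \<mapsto> (b, a\<^sub>i)\<close> maps \<open>M\<^sub>1\<close> onto an elementary submodel containing \<open>b\<close> but not \<open>a\<^sub>i\<close>.\<close>

section \<open>Syntax: coincidence, renaming and existential closure\<close>

instance trm :: (countable) countable by countable_datatype
instance fm :: (countable, countable) countable by countable_datatype

lemma finite_fv_trm: "finite (fv_trm t)"
  by (induction t) auto

lemma finite_fv_fm: "finite (fv_fm \<phi>)"
  by (induction \<phi>) (auto simp: finite_fv_trm)

lemma evalt_cong: "(\<And>v. v \<in> fv_trm t \<Longrightarrow> s v = s' v) \<Longrightarrow> evalt F s t = evalt F s' t"
proof (induction t)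
  case (Fn f ts)
  then have "map (evalt F s) ts = map (evalt F s') ts" by auto
  then show ?case by (simp only: evalt.simps)
qed simp

lemma sat_cong: "(\<And>v. v \<in> fv_fm \<phi> \<Longrightarrow> s v = s' v) \<Longrightarrow> sat M s \<phi> = sat M s' \<phi>"
proof (induction \<phi> arbitrary: s s')
  case (Eq t u)
  then show ?case using evalt_cong[of t s s'] evalt_cong[of u s s'] by simp
next
  case (Rel r ts)
  have "map (evalt (fint M) s) ts = map (evalt (fint M) s') ts"
    using Rel.prems by (intro map_cong refl evalt_cong) auto
  then show ?case by (simp only: sat.simps)
next
  case (Neg \<phi>)
  have "sat M s \<phi> = sat M s' \<phi>" by (rule Neg.IH) (simp add: Neg.prems)
  then show ?case by simp
next
  case (Conj \<phi> \<psi>)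
  have "sat M s \<phi> = sat M s' \<phi>" "sat M s \<psi> = sat M s' \<psi>"
    by (rule Conj.IH; simp add: Conj.prems)+
  then show ?case by simp
next
  case (Ex n \<phi>)
  have "sat M (s(n := a)) \<phi> = sat M (s'(n := a)) \<phi>" for a
    by (rule Ex.IH) (use Ex.prems in auto)
  then show ?case by simp
qed

lemma is_struct_nonempty: "is_struct L M \<Longrightarrow> udom M \<noteq> {}"
  and is_struct_fint: "is_struct L M \<Longrightarrow> fst L f = Some (length as) \<Longrightarrow> set as \<subseteq> udom M
    \<Longrightarrow> fint M f as \<in> udom M"
  unfolding is_struct_def by blast+

lemma evalt_in_udom:
  "is_struct L M \<Longrightarrow> wf_trm L t \<Longrightarrow> range s \<subseteq> udom M \<Longrightarrow> evalt (fint M) s t \<in> udom M"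
proof (induction t)
  case (Fn f ts)
  then have "set (map (evalt (fint M) s) ts) \<subseteq> udom M" by auto
  with Fn.prems show ?case using is_struct_fint[of L M f "map (evalt (fint M) s) ts"] by simp
qed auto

lemma map_evalt_Var: "map (evalt F s) (map Var xs) = map s xs"
  by (induction xs) auto

definition fresh :: "nat set \<Rightarrow> nat" where
  "fresh S = Suc (Max (insert 0 S))"

lemma less_fresh: "finite S \<Longrightarrow> v \<in> S \<Longrightarrow> v < fresh S"
  unfolding fresh_def by (simp add: le_imp_less_Suc)

lemma fresh_notin: "finite S \<Longrightarrow> fresh S \<notin> S"
  using less_fresh by blast

fun rename_trm :: "(nat \<Rightarrow> nat) \<Rightarrow> 'f trm \<Rightarrow> 'f trm" where
  "rename_trm h (Var n) = Var (h n)"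
| "rename_trm h (Fn f ts) = Fn f (map (rename_trm h) ts)"

text \<open>Capture-avoiding renaming of free variables: each bound variable is replaced by one
  that is fresh for the renamed free variables of its scope.\<close>
fun rename :: "(nat \<Rightarrow> nat) \<Rightarrow> ('f, 'r) fm \<Rightarrow> ('f, 'r) fm" where
  "rename h (Eq t u) = Eq (rename_trm h t) (rename_trm h u)"
| "rename h (Rel r ts) = Rel r (map (rename_trm h) ts)"
| "rename h (Neg \<phi>) = Neg (rename h \<phi>)"
| "rename h (Conj \<phi> \<psi>) = Conj (rename h \<phi>) (rename h \<psi>)"
| "rename h (Ex n \<phi>) =
     (let m = fresh (h ` (fv_fm \<phi> - {n})) in Ex m (rename (h(n := m)) \<phi>))"

lemma evalt_rename_trm: "evalt F s (rename_trm h t) = evalt F (s \<circ> h) t"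
  by (induction t) (auto cong: map_cong)

lemma wf_rename_trm: "wf_trm L (rename_trm h t) = wf_trm L t"
  by (induction t) auto

lemma fv_rename_trm: "fv_trm (rename_trm h t) = h ` fv_trm t"
  by (induction t) auto

lemma wf_rename: "wf_fm L (rename h \<phi>) = wf_fm L \<phi>"
  by (induction \<phi> arbitrary: h) (auto simp: wf_rename_trm Let_def)

lemma fv_rename: "fv_fm (rename h \<phi>) \<subseteq> h ` fv_fm \<phi>"
proof (induction \<phi> arbitrary: h)
  case (Ex n \<phi>)
  let ?m = "fresh (h ` (fv_fm \<phi> - {n}))"
  have "fv_fm (rename (h(n := ?m)) \<phi>) \<subseteq> (h(n := ?m)) ` fv_fm \<phi>" by (rule Ex.IH)
  then show ?case by (auto simp: Let_def)
next
  case (Conj \<phi>1 \<phi>2)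
  then show ?case by (simp add: image_Un) blast
qed (auto simp: fv_rename_trm)

lemma sat_rename: "sat M s (rename h \<phi>) = sat M (s \<circ> h) \<phi>"
proof (induction \<phi> arbitrary: s h)
  case (Ex n \<phi>)
  define m where "m = fresh (h ` (fv_fm \<phi> - {n}))"
  have "m \<notin> h ` (fv_fm \<phi> - {n})"
    unfolding m_def by (rule fresh_notin) (simp add: finite_fv_fm)
  then have "sat M (s(m := a) \<circ> h(n := m)) \<phi> = sat M ((s \<circ> h)(n := a)) \<phi>" for a
    by (intro sat_cong) auto
  then show ?case by (simp only: rename.simps Let_def m_def[symmetric] sat.simps Ex.IH)
next
  case (Rel r ts)
  have "map (evalt (fint M) s \<circ> rename_trm h) ts = map (evalt (fint M) (s \<circ> h)) ts"
    by (auto simp: evalt_rename_trm)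
  then show ?case by (simp only: sat.simps rename.simps map_map)
qed (auto simp: evalt_rename_trm simp del: comp_apply)

lemma wf_exs: "wf_fm L (exs vs \<phi>) = wf_fm L \<phi>"
  by (induction vs) auto

lemma fv_exs: "fv_fm (exs vs \<phi>) = fv_fm \<phi> - set vs"
  by (induction vs) auto

lemma sat_exsI:
  "range t \<subseteq> udom M \<Longrightarrow> sat M t \<phi> \<Longrightarrow> \<forall>v. v \<notin> set vs \<longrightarrow> t v = s v
    \<Longrightarrow> sat M s (exs vs \<phi>)"
proof (induction vs arbitrary: s)
  case Nil
  then have "t = s" by auto
  with Nil show ?case by simp
next
  case (Cons u vs)
  have "sat M (s(u := t u)) (exs vs \<phi>)"
    by (rule Cons.IH) (use Cons.prems in auto)
  moreover have "t u \<in> udom M" using Cons.prems by auto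
  ultimately show ?case by auto
qed

lemma sat_exsD:
  "range s \<subseteq> udom M \<Longrightarrow> sat M s (exs vs \<phi>) \<Longrightarrow>
    \<exists>t. range t \<subseteq> udom M \<and> (\<forall>v. v \<notin> set vs \<longrightarrow> t v = s v) \<and> sat M t \<phi>"
proof (induction vs arbitrary: s)
  case (Cons u vs)
  then obtain a where a: "a \<in> udom M" "sat M (s(u := a)) (exs vs \<phi>)" by auto
  with Cons.prems have "range (s(u := a)) \<subseteq> udom M" by auto
  from Cons.IH[OF this a(2)] obtain t where
    "range t \<subseteq> udom M" "\<forall>v. v \<notin> set vs \<longrightarrow> t v = (s(u := a)) v" "sat M t \<phi>"
    by blast
  then show ?case by (intro exI[of _ t]) auto
qed auto

lemma sat_exs_self: "range s \<subseteq> udom M \<Longrightarrow> sat M s \<phi> \<Longrightarrow> sat M s (exs vs \<phi>)"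
  by (rule sat_exsI[of s]) auto

section \<open>Elementary substructures and downward Loewenheim-Skolem\<close>

lemma models_is_struct: "models L T M \<Longrightarrow> is_struct L M"
  unfolding models_def by blast

lemma models_sat: "models L T M \<Longrightarrow> \<phi> \<in> T \<Longrightarrow> range s \<subseteq> udom M \<Longrightarrow> sat M s \<phi>"
  unfolding models_def by blast

lemma atomic_model_models: "atomic_model L T M \<Longrightarrow> models L T M"
  unfolding atomic_model_def by blast

lemma atomic_model_complete_fm:
  fixes M :: "('a, 'f, 'r) struct"
  shows "atomic_model L T M \<Longrightarrow> distinct w \<Longrightarrow> range s \<subseteq> udom M
    \<Longrightarrow> \<exists>\<theta>. complete_fm TYPE('a) L T w \<theta> \<and> sat M s \<theta>"
  unfolding atomic_model_def by blast

lemma complete_fm_wf: "complete_fm U L T w \<theta> \<Longrightarrow> wf_fm L \<theta>"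
  and complete_fm_fv: "complete_fm U L T w \<theta> \<Longrightarrow> fv_fm \<theta> \<subseteq> set w"
  unfolding complete_fm_def by blast+

lemma cam_atomic_model: "cam L T M \<Longrightarrow> atomic_model L T M"
  and cam_countable: "cam L T M \<Longrightarrow> countable (udom M)"
  unfolding cam_def by blast+

lemma cam_models: "cam L T M \<Longrightarrow> models L T M"
  by (rule atomic_model_models[OF cam_atomic_model])

lemma asg_restrict:
  assumes "udom M \<noteq> {}" "s ` V \<subseteq> udom M"
  obtains t where "range t \<subseteq> udom M" "\<forall>v\<in>V. t v = s v"
proof -
  obtain d where "d \<in> udom M" using assms(1) by blast
  then show thesis using assms(2) by (intro that[of "\<lambda>v. if v \<in> V then s v else d"]) auto
qed

lemma elem_sub_sat: "elem_sub L M N \<Longrightarrow> wf_fm L \<phi> \<Longrightarrow> range s \<subseteq> udom M \<Longrightarrow> sat M s \<phi> = sat N s \<phi>"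
  unfolding elem_sub_def by blast

lemma elem_sub_is_struct: "elem_sub L M N \<Longrightarrow> is_struct L M" "elem_sub L M N \<Longrightarrow> is_struct L N"
  and elem_sub_udom: "elem_sub L M N \<Longrightarrow> udom M \<subseteq> udom N"
  unfolding elem_sub_def by blast+

lemma elem_sub_refl: "is_struct L M \<Longrightarrow> elem_sub L M M"
  unfolding elem_sub_def by auto

lemma elem_sub_trans: "elem_sub L M1 M2 \<Longrightarrow> elem_sub L M2 M3 \<Longrightarrow> elem_sub L M1 M3"
  unfolding elem_sub_def by (intro conjI; metis subset_trans)

lemma elem_sub_between:
  "elem_sub L M N \<Longrightarrow> elem_sub L N0 N \<Longrightarrow> udom M \<subseteq> udom N0 \<Longrightarrow> elem_sub L M N0"
  unfolding elem_sub_def by (intro conjI; metis subset_trans)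

lemma elem_sub_realization:
  assumes sub: "elem_sub L M1 M0" and \<phi>: "wf_fm L \<phi>" "fv_fm \<phi> \<subseteq> V"
    and s: "s ` V \<subseteq> udom M1" "sat M0 s \<phi>"
  obtains s1 where "range s1 \<subseteq> udom M1" "\<forall>v\<in>V. s1 v = s v" "sat M1 s1 \<phi>"
proof -
  obtain s1 where s1: "range s1 \<subseteq> udom M1" "\<forall>v\<in>V. s1 v = s v"
    using asg_restrict[OF is_struct_nonempty[OF elem_sub_is_struct(1)[OF sub]] s(1)] by blast
  have "sat M0 s1 \<phi>" using s(2) s1(2) \<phi>(2) by (subst sat_cong[of \<phi> s1 s]) auto
  then have "sat M1 s1 \<phi>" using elem_sub_sat[OF sub \<phi>(1) s1(1)] by simp
  with s1 show thesis by (rule that)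
qed

lemma atomic_model_elem_sub:
  fixes M0 M :: "('a, 'f, 'r) struct"
  assumes T: "\<forall>\<phi>\<in>T. wf_fm L \<phi>" and sub: "elem_sub L M0 M" and M: "atomic_model L T M"
  shows "atomic_model L T M0"
  unfolding atomic_model_def models_def
proof (intro conjI allI impI ballI)
  show "is_struct L M0" using sub by (rule elem_sub_is_struct)
next
  fix \<phi> and s :: "nat \<Rightarrow> 'a"
  assume \<phi>: "\<phi> \<in> T" and s: "range s \<subseteq> udom M0"
  moreover have "range s \<subseteq> udom M" using s elem_sub_udom[OF sub] by blast
  ultimately have "sat M s \<phi>" using models_sat[OF atomic_model_models[OF M]] by blast
  then show "sat M0 s \<phi>" using elem_sub_sat[OF sub _ s] T \<phi> by blast
next
  fix w :: "nat list" and s :: "nat \<Rightarrow> 'a"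
  assume w: "distinct w \<and> range s \<subseteq> udom M0"
  then obtain \<theta> where \<theta>: "complete_fm TYPE('a) L T w \<theta>" "sat M s \<theta>"
    using atomic_model_complete_fm[OF M] elem_sub_udom[OF sub] by blast
  then have "sat M0 s \<theta>" using elem_sub_sat[OF sub complete_fm_wf] w by blast
  with \<theta>(1) show "\<exists>\<theta>. complete_fm TYPE('a) L T w \<theta> \<and> sat M0 s \<theta>" by blast
qed

lemma cam_elem_sub:
  "\<forall>\<phi>\<in>T. wf_fm L \<phi> \<Longrightarrow> elem_sub L M0 M \<Longrightarrow> atomic_model L T M \<Longrightarrow> countable (udom M0)
    \<Longrightarrow> cam L T M0"
  unfolding cam_def by (blast intro: atomic_model_elem_sub)

definition list_asg :: "'a list \<Rightarrow> 'a \<Rightarrow> nat \<Rightarrow> 'a" where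
  "list_asg as d v = (if v < length as then as ! v else d)"

lemma map_list_asg: "map (list_asg as d) [0..<length as] = as"
  by (rule nth_equalityI) (auto simp: list_asg_def)

lemma range_list_asg: "set as \<subseteq> D \<Longrightarrow> d \<in> D \<Longrightarrow> range (list_asg as d) \<subseteq> D"
  by (auto simp: list_asg_def)

definition tarski_vaught :: "('f, 'r) lang \<Rightarrow> ('a, 'f, 'r) struct \<Rightarrow> 'a set \<Rightarrow> bool" where
  "tarski_vaught L M D \<longleftrightarrow> (\<forall>\<phi> n s. wf_fm L \<phi> \<and> range s \<subseteq> D \<and> (\<exists>a\<in>udom M. sat M (s(n := a)) \<phi>)
     \<longrightarrow> (\<exists>a\<in>D. sat M (s(n := a)) \<phi>))"

lemma tarski_vaught_fint_closed:
  fixes L :: "('f, 'r) lang"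
  assumes M: "is_struct L M" and D: "D \<subseteq> udom M" "D \<noteq> {}" and tv: "tarski_vaught L M D"
    and f: "fst L f = Some (length as)" and as: "set as \<subseteq> D"
  shows "fint M f as \<in> D"
proof -
  obtain d where d: "d \<in> D" using D by auto
  let ?n = "length as"
  let ?s = "list_asg as d"
  let ?\<phi> = "Eq (Var ?n) (Fn f (map Var [0..<?n])) :: ('f, 'r) fm"
  have args: "map (evalt (fint M) (?s(?n := a))) (map Var [0..<?n]) = as" for a
    by (simp only: map_evalt_Var) (rule nth_equalityI; simp add: list_asg_def)
  have sat_iff: "sat M (?s(?n := a)) ?\<phi> \<longleftrightarrow> a = fint M f as" for a
    by (simp only: sat.simps evalt.simps args) simp
  have "fint M f as \<in> udom M" using is_struct_fint[OF M f] as D by blast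
  then have "\<exists>a\<in>udom M. sat M (?s(?n := a)) ?\<phi>" using sat_iff by blast
  moreover have "wf_fm L ?\<phi>" using f by simp
  ultimately obtain a where "a \<in> D" "sat M (?s(?n := a)) ?\<phi>"
    using tv range_list_asg[OF as d] unfolding tarski_vaught_def by blast
  then show ?thesis using sat_iff by simp
qed

lemma tarski_vaught_test:
  assumes M: "is_struct L M" and D: "D \<subseteq> udom M" "D \<noteq> {}" and tv: "tarski_vaught L M D"
  shows "elem_sub L (M\<lparr>udom := D\<rparr>) M"
proof -
  have "is_struct L (M\<lparr>udom := D\<rparr>)"
    unfolding is_struct_def using D tarski_vaught_fint_closed[OF M D tv] by auto
  moreover have "sat (M\<lparr>udom := D\<rparr>) s \<phi> = sat M s \<phi>" if "wf_fm L \<phi>" "range s \<subseteq> D" for \<phi> s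
    using that
  proof (induction \<phi> arbitrary: s)
    case (Ex n \<phi>)
    have IH: "a \<in> D \<Longrightarrow> sat (M\<lparr>udom := D\<rparr>) (s(n := a)) \<phi> = sat M (s(n := a)) \<phi>" for a
      using Ex by (intro Ex.IH) auto
    have "wf_fm L \<phi>" using Ex.prems by simp
    then have "(\<exists>a\<in>udom M. sat M (s(n := a)) \<phi>) \<longleftrightarrow> (\<exists>a\<in>D. sat M (s(n := a)) \<phi>)"
      using tv Ex.prems D unfolding tarski_vaught_def by blast
    then show ?case using IH by auto
  qed auto
  ultimately show ?thesis unfolding elem_sub_def using M D by auto
qed

lemma tarski_vaught_chain_Union:
  fixes N :: "('a, 'f, 'r) struct" and D :: "nat \<Rightarrow> 'a set"
  assumes mono: "\<And>k. D k \<subseteq> D (Suc k)" and d: "d \<in> D 0"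
    and wits: "\<And>k \<phi> n l. l \<in> lists (D k) \<Longrightarrow> \<exists>a\<in>udom N. sat N ((list_asg l d)(n := a)) \<phi>
      \<Longrightarrow> \<exists>a\<in>D (Suc k). sat N ((list_asg l d)(n := a)) \<phi>"
  shows "tarski_vaught L N (\<Union>k. D k)"
  unfolding tarski_vaught_def
proof (intro allI impI)
  fix \<phi> n s
  assume "wf_fm L \<phi> \<and> range s \<subseteq> (\<Union>k. D k) \<and> (\<exists>a\<in>udom N. sat N (s(n := a)) \<phi>)"
  then have s: "range s \<subseteq> (\<Union>k. D k)" and ex: "\<exists>a\<in>udom N. sat N (s(n := a)) \<phi>" by auto
  define K where "K = fresh (fv_fm \<phi>)"
  have "D i \<subseteq> D j \<or> D j \<subseteq> D i" for i j
    using lift_Suc_mono_le[of D, OF mono] nat_le_linear by metis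
  then have chain: "subset.chain UNIV (range D)" unfolding subset.chain_def by auto
  have "finite (s ` {..<K})" "s ` {..<K} \<subseteq> \<Union> (range D)" using s by auto
  then obtain k where k: "s ` {..<K} \<subseteq> D k"
    using finite_subset_Union_chain[OF _ _ _ chain] by blast
  define l where "l = map s [0..<K]"
  have agree: "sat N ((list_asg l d)(n := a)) \<phi> = sat N (s(n := a)) \<phi>" for a
    by (rule sat_cong) (auto simp: list_asg_def l_def K_def less_fresh finite_fv_fm)
  have "l \<in> lists (D k)" using k unfolding l_def by (auto simp: image_subset_iff)
  moreover have "\<exists>a\<in>udom N. sat N ((list_asg l d)(n := a)) \<phi>" using ex agree by simp
  ultimately obtain a where "a \<in> D (Suc k)" "sat N ((list_asg l d)(n := a)) \<phi>"
    using wits by blast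
  then show "\<exists>a\<in>\<Union>k. D k. sat N (s(n := a)) \<phi>" using agree by blast
qed

lemma downward_LS:
  fixes L :: "('f :: countable, 'r :: countable) lang" and N :: "('a, 'f, 'r) struct"
  assumes N: "is_struct L N" and X: "X \<subseteq> udom N" "countable X"
  shows "\<exists>N0. elem_sub L N0 N \<and> X \<subseteq> udom N0 \<and> countable (udom N0)"
proof -
  obtain d where d: "d \<in> udom N" using is_struct_nonempty[OF N] by auto
  define wit where "wit \<phi> n l = (SOME a. a \<in> udom N \<and> sat N ((list_asg l d)(n := a)) \<phi>)"
    for \<phi> :: "('f, 'r) fm" and n l
  define wits where "wits E = (\<lambda>(\<phi>, n, l). wit \<phi> n l) `
    {(\<phi>, n, l). l \<in> lists E \<and> (\<exists>a\<in>udom N. sat N ((list_asg l d)(n := a)) \<phi>)}" for E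
  define D where "D k = ((\<lambda>E. E \<union> wits E) ^^ k) (insert d X)" for k
  have D_0: "D 0 = insert d X" and D_Suc: "D (Suc k) = D k \<union> wits (D k)" for k
    by (simp_all add: D_def)
  have wit: "\<exists>a\<in>udom N. sat N ((list_asg l d)(n := a)) \<phi>
      \<Longrightarrow> wit \<phi> n l \<in> udom N \<and> sat N ((list_asg l d)(n := wit \<phi> n l)) \<phi>" for \<phi> n l
    unfolding wit_def by (rule someI_ex) blast
  have "wits E \<subseteq> udom N" for E unfolding wits_def using wit by auto
  then have D_udom: "D k \<subseteq> udom N" for k using X d by (induction k) (simp_all add: D_0 D_Suc)
  have "countable (wits E)" if "countable E" for E
  proof -
    have "countable (UNIV \<times> UNIV \<times> lists E :: (('f, 'r) fm \<times> nat \<times> 'a list) set)"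
      using that by (intro countable_SIGMA countable_lists) auto
    then show ?thesis unfolding wits_def by (rule countable_image[OF countable_subset, rotated]) auto
  qed
  then have D_countable: "countable (D k)" for k using X by (induction k) (simp_all add: D_0 D_Suc)
  have "d \<in> D 0" by (simp add: D_0)
  have "tarski_vaught L N (\<Union>k. D k)"
  proof (rule tarski_vaught_chain_Union[where D = D and d = d])
    fix k \<phi> n l assume "l \<in> lists (D k)" "\<exists>a\<in>udom N. sat N ((list_asg l d)(n := a)) \<phi>"
    then have "wit \<phi> n l \<in> wits (D k)" unfolding wits_def by force
    with wit show "\<exists>a\<in>D (Suc k). sat N ((list_asg l d)(n := a)) \<phi>"
      using \<open>\<exists>a\<in>udom N. _\<close> D_Suc by blast
  qed (simp_all add: D_Suc \<open>d \<in> D 0\<close>)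
  then have "elem_sub L (N\<lparr>udom := \<Union>k. D k\<rparr>) N"
    using D_udom \<open>d \<in> D 0\<close> by (intro tarski_vaught_test[OF N]) blast+
  moreover have "X \<subseteq> (\<Union>k. D k)" using UN_upper[of 0 UNIV D] by (auto simp: D_0)
  ultimately show ?thesis using D_countable by (intro exI[of _ "N\<lparr>udom := \<Union>k. D k\<rparr>"]) auto
qed

lemma downward_LS_cam:
  fixes L :: "('f :: countable, 'r :: countable) lang" and N :: "('a, 'f, 'r) struct"
  assumes T: "\<forall>\<phi>\<in>T. wf_fm L \<phi>" and N: "atomic_model L T N" and X: "X \<subseteq> udom N" "countable X"
  shows "\<exists>N0. cam L T N0 \<and> elem_sub L N0 N \<and> X \<subseteq> udom N0"
  using downward_LS[OF models_is_struct[OF atomic_model_models[OF N]] X] cam_elem_sub[OF T _ N]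
  by blast

section \<open>Complete formulas and types\<close>

lemma complete_fm_decides:
  fixes U :: "'a itself"
  assumes "complete_fm U L T w \<chi>" "wf_fm L \<phi>" "fv_fm \<phi> \<subseteq> set w"
  shows "(\<forall>(M :: ('a, 'f, 'r) struct) s. models L T M \<and> range s \<subseteq> udom M \<and> sat M s \<chi> \<longrightarrow> sat M s \<phi>) \<or>
    (\<forall>(M :: ('a, 'f, 'r) struct) s. models L T M \<and> range s \<subseteq> udom M \<and> sat M s \<chi> \<longrightarrow> \<not> sat M s \<phi>)"
  using assms unfolding complete_fm_def by blast

lemma complete_fm_realized:
  "complete_fm (U :: 'a itself) L T w \<theta> \<Longrightarrow>
    \<exists>(M :: ('a, 'f, 'r) struct) s. models L T M \<and> range s \<subseteq> udom M \<and> sat M s \<theta>"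
  unfolding complete_fm_def by blast

definition same_type ::
  "('f, 'r) lang \<Rightarrow> ('a, 'f, 'r) struct \<Rightarrow> (nat \<Rightarrow> 'a) \<Rightarrow> ('b, 'f, 'r) struct \<Rightarrow> (nat \<Rightarrow> 'b)
    \<Rightarrow> nat set \<Rightarrow> bool" where
  "same_type L A sA M sM V \<longleftrightarrow>
     (\<forall>\<phi>. wf_fm L \<phi> \<and> fv_fm \<phi> \<subseteq> V \<longrightarrow> (sat A sA \<phi> \<longleftrightarrow> sat M sM \<phi>))"

lemma same_type_sat_iff:
  "same_type L A sA M sM V \<Longrightarrow> wf_fm L \<phi> \<Longrightarrow> fv_fm \<phi> \<subseteq> V \<Longrightarrow> sat A sA \<phi> \<longleftrightarrow> sat M sM \<phi>"
  unfolding same_type_def by blast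

lemma complete_fm_same_type:
  fixes A M :: "('a, 'f, 'r) struct"
  assumes "complete_fm (U :: 'a itself) L T w \<chi>"
    and "models L T A" "range sA \<subseteq> udom A" "sat A sA \<chi>"
    and "models L T M" "range sM \<subseteq> udom M" "sat M sM \<chi>"
  shows "same_type L A sA M sM (set w)"
  unfolding same_type_def using complete_fm_decides[OF assms(1)] assms(2-) by blast

lemma complete_fm_exs:
  fixes U :: "'a itself" and L :: "('f, 'r) lang"
  assumes c: "complete_fm U L T w \<theta>" and v: "set v \<subseteq> set w" "set w - set us \<subseteq> set v"
    and disj: "set us \<inter> set v = {}"
  shows "complete_fm U L T v (exs us \<theta>)"
  unfolding complete_fm_def
proof (intro conjI allI impI)
  show "wf_fm L (exs us \<theta>)" using complete_fm_wf[OF c] by (simp add: wf_exs)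
  show "fv_fm (exs us \<theta>) \<subseteq> set v" using complete_fm_fv[OF c] v by (auto simp: fv_exs)
  show "\<exists>(M :: ('a, 'f, 'r) struct) s. models L T M \<and> range s \<subseteq> udom M \<and> sat M s (exs us \<theta>)"
    using complete_fm_realized[OF c] sat_exs_self by blast
next
  fix \<psi> assume \<psi>: "wf_fm L \<psi> \<and> fv_fm \<psi> \<subseteq> set v"
  have "fv_fm \<psi> \<subseteq> set w" using \<psi> v(1) by blast
  with complete_fm_decides[OF c] \<psi> obtain b where b: "\<And>(M :: ('a, 'f, 'r) struct) s. models L T M \<Longrightarrow> range s \<subseteq> udom M
      \<Longrightarrow> sat M s \<theta> \<Longrightarrow> sat M s \<psi> = b"
    by (metis (full_types))
  have "sat M s \<psi> = b"
    if M: "models L T M" "range s \<subseteq> udom M" "sat M s (exs us \<theta>)" for M :: "('a, 'f, 'r) struct" and s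
  proof -
    obtain t where t: "range t \<subseteq> udom M" "\<forall>x. x \<notin> set us \<longrightarrow> t x = s x" "sat M t \<theta>"
      using sat_exsD[OF M(2,3)] by blast
    have "sat M s \<psi> = sat M t \<psi>" using \<psi> disj t(2) by (intro sat_cong) (metis disjoint_iff subsetD)
    with b[OF M(1) t(1,3)] show ?thesis by simp
  qed
  then show "(\<forall>(M :: ('a, 'f, 'r) struct) s. models L T M \<and> range s \<subseteq> udom M \<and> sat M s (exs us \<theta>)
        \<longrightarrow> sat M s \<psi>) \<or>
      (\<forall>(M :: ('a, 'f, 'r) struct) s. models L T M \<and> range s \<subseteq> udom M \<and> sat M s (exs us \<theta>)
        \<longrightarrow> \<not> sat M s \<psi>)"
    by (cases b) auto
qed

lemma complete_fm_restr:
  "complete_fm U L T w \<theta> \<Longrightarrow> set v \<subseteq> set w \<Longrightarrow> complete_fm U L T v (restr w v \<theta>)"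
  unfolding restr_def by (rule complete_fm_exs) auto

lemma complete_theory_decides:
  fixes U :: "'a itself"
  assumes "complete_theory U L T" "sentence L \<phi>"
  shows "(\<forall>(M :: ('a, 'f, 'r) struct) s. models L T M \<and> range s \<subseteq> udom M \<longrightarrow> sat M s \<phi>) \<or>
    (\<forall>(M :: ('a, 'f, 'r) struct) s. models L T M \<and> range s \<subseteq> udom M \<longrightarrow> \<not> sat M s \<phi>)"
  using assms unfolding complete_theory_def by blast

lemma complete_theory_wf: "complete_theory U L T \<Longrightarrow> \<forall>\<phi>\<in>T. wf_fm L \<phi>"
  unfolding complete_theory_def sentence_def by blast

lemma complete_fm_realized_in_cam:
  fixes L :: "('f :: countable, 'r :: countable) lang" and U :: "'a itself"
  assumes T: "complete_theory U L T" and M: "atomic_model L T (M :: ('a, 'f, 'r) struct)"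
    and c: "complete_fm U L T w \<theta>"
  shows "\<exists>(M0 :: ('a, 'f, 'r) struct) s. cam L T M0 \<and> range s \<subseteq> udom M0 \<and> sat M0 s \<theta>"
proof -
  have Mm: "models L T M" using M by (rule atomic_model_models)
  obtain u where u: "u \<in> udom M" using is_struct_nonempty[OF models_is_struct[OF Mm]] by auto
  \<comment> \<open>\<open>\<theta>\<close> is consistent with \<open>T\<close>, so by completeness of \<open>T\<close> its existential closure holds in \<open>M\<close>\<close>
  have sentence: "sentence L (exs w \<theta>)"
    using complete_fm_wf[OF c] complete_fm_fv[OF c] unfolding sentence_def by (auto simp: wf_exs fv_exs)
  obtain M' :: "('a, 'f, 'r) struct" and s' where M': "models L T M'" "range s' \<subseteq> udom M'"
    and "sat M' s' \<theta>"
    using complete_fm_realized[OF c] by blast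
  then have "sat M' s' (exs w \<theta>)" by (intro sat_exs_self)
  moreover have "range (\<lambda>_. u) \<subseteq> udom M" using u by auto
  ultimately have "sat M (\<lambda>_. u) (exs w \<theta>)"
    using complete_theory_decides[OF T sentence] M' Mm by blast
  then obtain t where t: "range t \<subseteq> udom M" "sat M t \<theta>" using sat_exsD[of "\<lambda>_. u"] u by blast
  obtain M0 where M0: "cam L T M0" "elem_sub L M0 M" "t ` set w \<subseteq> udom M0"
    using downward_LS_cam[OF complete_theory_wf[OF T] M, of "t ` set w"] t(1) by auto
  obtain s where "range s \<subseteq> udom M0" "sat M0 s \<theta>"
    by (rule elem_sub_realization[OF M0(2) complete_fm_wf[OF c] complete_fm_fv[OF c] M0(3) t(2)])
  with M0(1) show ?thesis by blast
qed

section \<open>Elementary embeddings\<close>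

definition elem_emb :: "('f, 'r) lang \<Rightarrow> ('a, 'f, 'r) struct \<Rightarrow> ('b, 'f, 'r) struct \<Rightarrow> ('a \<Rightarrow> 'b) \<Rightarrow> bool" where
  "elem_emb L A M f \<longleftrightarrow> (\<forall>a\<in>udom A. f a \<in> udom M) \<and>
     (\<forall>\<phi> s. wf_fm L \<phi> \<and> range s \<subseteq> udom A \<longrightarrow> (sat A s \<phi> \<longleftrightarrow> sat M (f \<circ> s) \<phi>))"

lemma elem_emb_into: "elem_emb L A M f \<Longrightarrow> a \<in> udom A \<Longrightarrow> f a \<in> udom M"
  unfolding elem_emb_def by blast

lemma elem_emb_sat:
  "elem_emb L A M f \<Longrightarrow> wf_fm L \<phi> \<Longrightarrow> range s \<subseteq> udom A \<Longrightarrow> sat A s \<phi> \<longleftrightarrow> sat M (f \<circ> s) \<phi>"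
  unfolding elem_emb_def by blast

lemma elem_emb_inj_on:
  fixes L :: "('f, 'r) lang"
  assumes f: "elem_emb L A M f"
  shows "inj_on f (udom A)"
proof
  fix a b assume ab: "a \<in> udom A" "b \<in> udom A" "f a = f b"
  define s where "s v = (if v = 0 then a else b)" for v :: nat
  have "range s \<subseteq> udom A" using ab unfolding s_def by auto
  moreover have "sat M (f \<circ> s) (Eq (Var 0) (Var 1))" using ab(3) unfolding s_def by simp
  ultimately have "sat A s (Eq (Var 0) (Var 1))" by (intro elem_emb_sat[OF f, THEN iffD2]) simp_all
  then show "a = b" unfolding s_def by simp
qed

lemma elem_emb_fint:
  fixes L :: "('f, 'r) lang"
  assumes A: "is_struct L A" and f: "elem_emb L A M f"
    and F: "fst L F = Some (length as)" and as: "set as \<subseteq> udom A"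
  shows "fint M F (map f as) = f (fint A F as)"
proof -
  let ?n = "length as"
  define c where "c = fint A F as"
  have c: "c \<in> udom A" using is_struct_fint[OF A F as] unfolding c_def .
  define s where "s = (list_asg as c)(?n := c)"
  have "range s \<subseteq> udom A" using range_list_asg[OF as c] c unfolding s_def by auto
  have args: "map s [0..<?n] = as" unfolding s_def using map_list_asg[of as c] by simp
  let ?\<phi> = "Eq (Var ?n) (Fn F (map Var [0..<?n])) :: ('f, 'r) fm"
  have "sat A s ?\<phi>" by (simp only: sat.simps evalt.simps map_evalt_Var args) (simp add: s_def c_def)
  then have "sat M (f \<circ> s) ?\<phi>"
    by (intro elem_emb_sat[OF f _ \<open>range s \<subseteq> udom A\<close>, THEN iffD1]) (simp_all add: F)
  then show ?thesis
    by (simp only: sat.simps evalt.simps map_evalt_Var map_map[symmetric] args) (simp add: s_def c_def)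
qed

lemma elem_emb_rint:
  fixes L :: "('f, 'r) lang"
  assumes A: "is_struct L A" and f: "elem_emb L A M f"
    and R: "snd L R = Some (length as)" and as: "set as \<subseteq> udom A"
  shows "rint M R (map f as) = rint A R as"
proof -
  obtain c where c: "c \<in> udom A" using is_struct_nonempty[OF A] by auto
  let ?s = "list_asg as c"
  let ?\<phi> = "Rel R (map Var [0..<length as]) :: ('f, 'r) fm"
  have args: "map ?s [0..<length as] = as" "map (f \<circ> ?s) [0..<length as] = map f as"
    using map_list_asg[of as c] by (simp_all flip: map_map)
  have "sat A ?s ?\<phi> = sat M (f \<circ> ?s) ?\<phi>"
    by (rule elem_emb_sat[OF f _ range_list_asg[OF as c]]) (simp add: R)
  then show ?thesis by (simp only: sat.simps map_evalt_Var args)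
qed

lemma elem_emb_id_imp_elem_sub:
  fixes M N :: "('a, 'f, 'r) struct"
  assumes M: "is_struct L M" and N: "is_struct L N" and emb: "elem_emb L M N id"
  shows "elem_sub L M N"
proof -
  have "udom M \<subseteq> udom N" using elem_emb_into[OF emb] by auto
  moreover have "fint M F as = fint N F as"
    if "fst L F = Some n \<and> length as = n \<and> set as \<subseteq> udom M" for F n as
    using elem_emb_fint[OF M emb] that by simp
  moreover have "rint M R as = rint N R as"
    if "snd L R = Some n \<and> length as = n \<and> set as \<subseteq> udom M" for R n as
    using elem_emb_rint[OF M emb] that by simp
  moreover have "sat M s \<phi> = sat N s \<phi>" if "wf_fm L \<phi> \<and> range s \<subseteq> udom M" for \<phi> s
    using elem_emb_sat[OF emb] that by simp
  ultimately show ?thesis unfolding elem_sub_def using M N by simp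
qed

lemma elem_emb_image_elem_sub:
  assumes f: "elem_emb L A M f" and B: "elem_sub L B A" and M: "is_struct L M"
  shows "elem_sub L (M\<lparr>udom := f ` udom B\<rparr>) M"
proof (rule tarski_vaught_test[OF M])
  have BA: "udom B \<subseteq> udom A" using B by (rule elem_sub_udom)
  then show "f ` udom B \<subseteq> udom M" using elem_emb_into[OF f] by blast
  show "f ` udom B \<noteq> {}" using is_struct_nonempty[OF elem_sub_is_struct(1)[OF B]] by blast
  show "tarski_vaught L M (f ` udom B)" unfolding tarski_vaught_def
  proof (intro allI impI)
    fix \<phi> n s assume h: "wf_fm L \<phi> \<and> range s \<subseteq> f ` udom B \<and> (\<exists>a\<in>udom M. sat M (s(n := a)) \<phi>)"
    define t where "t = inv_into (udom B) f \<circ> s"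
    have t: "range t \<subseteq> udom B" "f \<circ> t = s"
      using h by (auto simp: t_def inv_into_into f_inv_into_f image_subset_iff)
    \<comment> \<open>pull the existential back along \<open>f\<close>, witness it in \<open>B \<preceq> A\<close>, and push the witness forward\<close>
    have wf: "wf_fm L (Ex n \<phi>)" using h by simp
    have "sat M (f \<circ> t) (Ex n \<phi>)" using h t(2) by simp
    then have "sat B t (Ex n \<phi>)"
      using elem_emb_sat[OF f wf] elem_sub_sat[OF B wf] t(1) BA by blast
    then obtain b where b: "b \<in> udom B" "sat B (t(n := b)) \<phi>" by auto
    then have "range (t(n := b)) \<subseteq> udom B" using t(1) by auto
    with b h have "sat M (f \<circ> t(n := b)) \<phi>"
      using elem_emb_sat[OF f] elem_sub_sat[OF B] BA by (meson order_trans)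
    moreover have "f \<circ> t(n := b) = s(n := f b)" using t(2) by auto
    ultimately show "\<exists>a\<in>f ` udom B. sat M (s(n := a)) \<phi>" using b(1) by auto
  qed
qed

lemma same_type_extend:
  fixes A M :: "('a, 'f, 'r) struct"
  assumes A: "atomic_model L T A" and M: "models L T M" and W: "finite W"
    and sA: "range sA \<subseteq> udom A" and sM: "range sM \<subseteq> udom M"
    and st: "same_type L A sA M sM W"
  shows "\<exists>d\<in>udom M. same_type L A sA M (sM(m := d)) (insert m W)"
proof -
  define w where "w = sorted_list_of_set (insert m W)"
  have "finite (insert m W)" using W by simp
  then have w: "distinct w" "set w = insert m W"
    unfolding w_def by (simp_all only: distinct_sorted_list_of_set set_sorted_list_of_set)
  obtain \<chi> where \<chi>: "complete_fm TYPE('a) L T w \<chi>" "sat A sA \<chi>"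
    using atomic_model_complete_fm[OF A w(1) sA] by blast
  have "sat A sA (Ex m \<chi>)" using \<chi>(2) sA by (auto intro!: bexI[of _ "sA m"])
  moreover have "fv_fm (Ex m \<chi>) \<subseteq> W" using complete_fm_fv[OF \<chi>(1)] w(2) by auto
  moreover have "wf_fm L (Ex m \<chi>)" using complete_fm_wf[OF \<chi>(1)] by simp
  ultimately have "sat M sM (Ex m \<chi>)" using same_type_sat_iff[OF st] by blast
  then obtain d where d: "d \<in> udom M" "sat M (sM(m := d)) \<chi>" by auto
  have "range (sM(m := d)) \<subseteq> udom M" using sM d(1) by auto
  then have "same_type L A sA M (sM(m := d)) (set w)"
    using complete_fm_same_type[OF \<chi>(1) atomic_model_models[OF A] sA \<chi>(2) M] d(2) by blast
  with d(1) w(2) show ?thesis by auto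
qed

lemma sat_stabilizing_limit:
  assumes seq_Suc: "\<And>k v. v \<noteq> m0 + k \<Longrightarrow> seq (Suc k) v = seq k v"
    and below: "\<forall>v\<in>fv_fm \<phi>. v < k"
  shows "sat M (seq k) \<phi> = sat M (\<lambda>v. seq (Suc v) v) \<phi>"
proof (rule sat_cong)
  have stable: "seq j v = seq i v" if v: "v < m0 + i" and "i \<le> j" for i j v
    using \<open>i \<le> j\<close>
  proof (induction j rule: dec_induct)
    case (step j)
    then show ?case using seq_Suc[of v j] v by simp
  qed simp
  fix v assume "v \<in> fv_fm \<phi>"
  then have "v < m0 + min (Suc v) k" using below by auto
  then show "seq k v = seq (Suc v) v"
    using stable[of v "min (Suc v) k" k] stable[of v "min (Suc v) k" "Suc v"] by simp
qed

text \<open>The forth direction of a back-and-forth argument: a type realized in an atomic model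
  extends, one new variable \<open>m0 + k\<close> at a time, to all variables \<open>\<ge> m0\<close>.\<close>
lemma same_type_limit:
  fixes A M :: "('a, 'f, 'r) struct"
  assumes A: "atomic_model L T A" and M: "models L T M" and V: "finite V" "\<forall>v\<in>V. v < m0"
    and SA: "range SA \<subseteq> udom A" and sM: "range sM \<subseteq> udom M"
    and st: "same_type L A SA M sM V"
  shows "\<exists>SM. range SM \<subseteq> udom M \<and> (\<forall>v\<in>V. SM v = sM v) \<and> same_type L A SA M SM (V \<union> {m0..})"
proof -
  define P where "P k S \<longleftrightarrow> range S \<subseteq> udom M \<and> (\<forall>v\<in>V. S v = sM v)
    \<and> same_type L A SA M S (V \<union> {m0..<m0 + k})" for k S
  have P0: "P 0 sM" using sM st unfolding P_def by simp
  have P_Suc: "\<exists>S'. P (Suc k) S' \<and> (\<forall>v. v \<noteq> m0 + k \<longrightarrow> S' v = S v)" if "P k S" for k S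
  proof -
    have "insert (m0 + k) (V \<union> {m0..<m0 + k}) = V \<union> {m0..<m0 + Suc k}" by auto
    then obtain d where "d \<in> udom M" "same_type L A SA M (S(m0 + k := d)) (V \<union> {m0..<m0 + Suc k})"
      using same_type_extend[OF A M _ SA, where sM = S and W = "V \<union> {m0..<m0 + k}" and m = "m0 + k"]
        V(1) \<open>P k S\<close> unfolding P_def by auto
    then have "P (Suc k) (S(m0 + k := d))"
      using \<open>P k S\<close> V(2) unfolding P_def by (auto simp: image_subset_iff)
    then show ?thesis by auto
  qed
  obtain seq where seq: "\<And>k. P k (seq k)"
    and seq_Suc: "\<And>k v. v \<noteq> m0 + k \<Longrightarrow> seq (Suc k) v = seq k v"
    using dependent_nat_choice[of P "\<lambda>k S S'. \<forall>v. v \<noteq> m0 + k \<longrightarrow> S' v = S v",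
      OF exI[of "P 0", OF P0] P_Suc] by blast
  define SM where "SM v = seq (Suc v) v" for v
  have "sat A SA \<phi> = sat M SM \<phi>" if \<phi>: "wf_fm L \<phi>" "fv_fm \<phi> \<subseteq> V \<union> {m0..}" for \<phi>
  proof -
    define k where "k = fresh (fv_fm \<phi>)"
    have below: "\<forall>v\<in>fv_fm \<phi>. v < k" unfolding k_def by (simp add: less_fresh finite_fv_fm)
    with \<phi>(2) have "fv_fm \<phi> \<subseteq> V \<union> {m0..<m0 + k}" by fastforce
    moreover have "same_type L A SA M (seq k) (V \<union> {m0..<m0 + k})" using seq[of k] unfolding P_def by blast
    ultimately have "sat A SA \<phi> = sat M (seq k) \<phi>" using same_type_sat_iff \<phi>(1) by blast
    also have "\<dots> = sat M SM \<phi>" unfolding SM_def using seq_Suc below by (rule sat_stabilizing_limit)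
    finally show ?thesis .
  qed
  moreover have "range (seq k) \<subseteq> udom M" "\<forall>v\<in>V. seq k v = sM v" for k
    using seq[of k] unfolding P_def by blast+
  then have "range SM \<subseteq> udom M" "\<forall>v\<in>V. SM v = sM v" unfolding SM_def by auto
  ultimately show ?thesis unfolding same_type_def by blast
qed

lemma elem_emb_of_same_type:
  fixes A :: "('a, 'f, 'r) struct" and M :: "('b, 'f, 'r) struct"
  assumes SA: "range SA \<subseteq> udom A" and SM: "range SM \<subseteq> udom M"
    and onto: "udom A \<subseteq> SA ` S" and st: "same_type L A SA M SM S"
  shows "\<exists>f. elem_emb L A M f \<and> (\<forall>v\<in>S. f (SA v) = SM v)"
proof -
  define idx where "idx a = (SOME v. v \<in> S \<and> SA v = a)" for a
  have idx: "idx a \<in> S" "SA (idx a) = a" if "a \<in> udom A" for a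
    using someI_ex[of "\<lambda>v. v \<in> S \<and> SA v = a"] onto that unfolding idx_def by blast+
  define f where "f a = SM (idx a)" for a
  have "sat A s \<phi> = sat M (f \<circ> s) \<phi>" if \<phi>: "wf_fm L \<phi>" and s: "range s \<subseteq> udom A" for \<phi> s
  proof -
    have "SA \<circ> (idx \<circ> s) = s" using idx(2) s by (auto simp: image_subset_iff)
    moreover have "SM \<circ> (idx \<circ> s) = f \<circ> s" by (auto simp: f_def)
    moreover have "fv_fm (rename (idx \<circ> s) \<phi>) \<subseteq> S" using fv_rename[of "idx \<circ> s" \<phi>] idx(1) s by fastforce
    ultimately show ?thesis using same_type_sat_iff[OF st] \<phi> by (metis sat_rename wf_rename)
  qed
  moreover have "f (SA v) = SM v" if "v \<in> S" for v
  proof -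
    let ?\<phi> = "Eq (Var v) (Var (idx (SA v))) :: ('f, 'r) fm"
    have "SA v \<in> udom A" using SA by auto
    then have "sat A SA ?\<phi>" "fv_fm ?\<phi> \<subseteq> S" using idx \<open>v \<in> S\<close> by simp_all
    moreover have "wf_fm L ?\<phi>" by simp
    ultimately have "sat M SM ?\<phi>" using same_type_sat_iff[OF st] by blast
    then show ?thesis by (simp add: f_def)
  qed
  moreover have "f a \<in> udom M" for a using SM by (auto simp: f_def)
  ultimately show ?thesis unfolding elem_emb_def by blast
qed

lemma cam_elem_emb:
  fixes A M :: "('a, 'f, 'r) struct"
  assumes A: "cam L T A" and M: "models L T M" and V: "finite V"
    and sA: "range sA \<subseteq> udom A" and sM: "range sM \<subseteq> udom M" and st: "same_type L A sA M sM V"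
  shows "\<exists>f. elem_emb L A M f \<and> (\<forall>v\<in>V. f (sA v) = sM v)"
proof -
  define m0 where "m0 = fresh V"
  have below: "\<forall>v\<in>V. v < m0" using less_fresh[OF V] unfolding m0_def by blast
  have "udom A \<noteq> {}" using is_struct_nonempty[OF models_is_struct[OF cam_models[OF A]]] .
  define e where "e = from_nat_into (udom A)"
  \<comment> \<open>the variables from \<open>m0\<close> on enumerate \<open>A\<close>\<close>
  define SA where "SA v = (if v < m0 then sA v else e (v - m0))" for v
  have SA: "range SA \<subseteq> udom A"
    using sA from_nat_into[OF \<open>udom A \<noteq> {}\<close>] by (auto simp: SA_def e_def)
  have onto: "udom A \<subseteq> SA ` (V \<union> {m0..})"
  proof
    fix a assume "a \<in> udom A"
    then obtain k where "e k = a"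
      using from_nat_into_surj[OF cam_countable[OF A]] unfolding e_def by blast
    then show "a \<in> SA ` (V \<union> {m0..})" by (intro image_eqI[of _ _ "m0 + k"]) (auto simp: SA_def)
  qed
  have "sat A SA \<phi> = sat A sA \<phi>" if "fv_fm \<phi> \<subseteq> V" for \<phi>
    using that below by (intro sat_cong) (auto simp: SA_def)
  then have "same_type L A SA M sM V" using st unfolding same_type_def by simp
  then obtain SM where SM: "range SM \<subseteq> udom M" "\<forall>v\<in>V. SM v = sM v" "same_type L A SA M SM (V \<union> {m0..})"
    using same_type_limit[OF cam_atomic_model[OF A] M V below SA sM] by blast
  obtain f where f: "elem_emb L A M f" "\<forall>v\<in>V \<union> {m0..}. f (SA v) = SM v"
    using elem_emb_of_same_type[OF SA SM(1) onto SM(3)] by blast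
  have "f (sA v) = sM v" if "v \<in> V" for v
    using f(2)[rule_format, of v] SM(2) below that by (simp add: SA_def)
  with f(1) show ?thesis by blast
qed

lemma elem_sub_transfer:
  fixes A B M :: "('a, 'f, 'r) struct"
  assumes T: "\<forall>\<phi>\<in>T. wf_fm L \<phi>" and A: "cam L T A" and B: "elem_sub L B A" "countable (udom B)"
    and M: "atomic_model L T M" and V: "finite V"
    and sA: "range sA \<subseteq> udom A" and sM: "range sM \<subseteq> udom M" and st: "same_type L A sA M sM V"
  shows "\<exists>M0. cam L T M0 \<and> elem_sub L M0 M \<and> (\<forall>v\<in>V. sM v \<in> udom M0 \<longleftrightarrow> sA v \<in> udom B)"
proof -
  obtain f where f: "elem_emb L A M f" "\<forall>v\<in>V. f (sA v) = sM v"
    using cam_elem_emb[OF A atomic_model_models[OF M] V sA sM st] by blast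
  define M0 where "M0 = M\<lparr>udom := f ` udom B\<rparr>"
  have sub: "elem_sub L M0 M"
    unfolding M0_def
    by (rule elem_emb_image_elem_sub[OF f(1) B(1) models_is_struct[OF atomic_model_models[OF M]]])
  moreover have "cam L T M0" using cam_elem_sub[OF T sub M] B(2) by (simp add: M0_def)
  moreover have "sM v \<in> udom M0 \<longleftrightarrow> sA v \<in> udom B" if "v \<in> V" for v
  proof -
    have "sA v \<in> udom A" using sA by auto
    then have "f (sA v) \<in> f ` udom B \<longleftrightarrow> sA v \<in> udom B"
      using inj_on_image_mem_iff[OF elem_emb_inj_on[OF f(1)] _ elem_sub_udom[OF B(1)]] by blast
    with f(2) that show ?thesis by (simp add: M0_def)
  qed
  ultimately show ?thesis by blast
qed

section \<open>Isomorphic copies\<close>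

definition image_struct :: "('a \<Rightarrow> 'b) \<Rightarrow> ('a, 'f, 'r) struct \<Rightarrow> ('b, 'f, 'r) struct" where
  "image_struct h N = \<lparr>udom = h ` udom N,
     fint = (\<lambda>F bs. h (fint N F (map (inv_into (udom N) h) bs))),
     rint = (\<lambda>R bs. rint N R (map (inv_into (udom N) h) bs))\<rparr>"

lemma udom_image_struct [simp]: "udom (image_struct h N) = h ` udom N"
  by (simp add: image_struct_def)

lemma fint_image_struct:
  "fint (image_struct h N) F bs = h (fint N F (map (inv_into (udom N) h) bs))"
  and rint_image_struct: "rint (image_struct h N) R bs = rint N R (map (inv_into (udom N) h) bs)"
  by (simp_all add: image_struct_def)

lemma evalt_image_struct:
  assumes N: "is_struct L N" and h: "inj_on h (udom N)"
    and t: "wf_trm L tm" "range s \<subseteq> udom N"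
  shows "evalt (fint (image_struct h N)) (h \<circ> s) tm = h (evalt (fint N) s tm)"
  using t(1)
proof (induction tm)
  case (Fn F ts)
  have "inv_into (udom N) h (evalt (fint (image_struct h N)) (h \<circ> s) t') = evalt (fint N) s t'"
    if "t' \<in> set ts" for t'
  proof -
    have "wf_trm L t'" using Fn.prems that by simp
    then have "evalt (fint (image_struct h N)) (h \<circ> s) t' = h (evalt (fint N) s t')"
      by (rule Fn.IH[OF that])
    with evalt_in_udom[OF N \<open>wf_trm L t'\<close> t(2)] h show ?thesis by simp
  qed
  then have "map (inv_into (udom N) h) (map (evalt (fint (image_struct h N)) (h \<circ> s)) ts)
      = map (evalt (fint N) s) ts"
    unfolding map_map by (intro map_cong refl) (simp only: comp_apply)
  have "evalt (fint (image_struct h N)) (h \<circ> s) (Fn F ts)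
      = fint (image_struct h N) F (map (evalt (fint (image_struct h N)) (h \<circ> s)) ts)"
    by (simp only: evalt.simps)
  also have "\<dots> = h (fint N F (map (evalt (fint N) s) ts))"
    by (simp only: fint_image_struct \<open>map (inv_into (udom N) h) _ = _\<close>)
  finally show ?case by (simp only: evalt.simps)
qed simp

lemma sat_image_struct:
  assumes N: "is_struct L N" and h: "inj_on h (udom N)"
    and "wf_fm L \<phi>" "range s \<subseteq> udom N"
  shows "sat (image_struct h N) (h \<circ> s) \<phi> \<longleftrightarrow> sat N s \<phi>"
  using assms(3,4)
proof (induction \<phi> arbitrary: s)
  case (Eq t u)
  then have "evalt (fint (image_struct h N)) (h \<circ> s) t = h (evalt (fint N) s t)"
    "evalt (fint (image_struct h N)) (h \<circ> s) u = h (evalt (fint N) s u)"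
    by (auto intro!: evalt_image_struct[OF N h])
  moreover have "evalt (fint N) s t \<in> udom N" "evalt (fint N) s u \<in> udom N"
    using Eq evalt_in_udom[OF N] by auto
  ultimately show ?case by (simp only: sat.simps) (use inj_on_eq_iff[OF h] in blast)
next
  case (Rel R ts)
  have "inv_into (udom N) h (evalt (fint (image_struct h N)) (h \<circ> s) t') = evalt (fint N) s t'"
    if "t' \<in> set ts" for t'
  proof -
    have "wf_trm L t'" using Rel.prems that by simp
    with Rel.prems show ?thesis
      using evalt_image_struct[OF N h \<open>wf_trm L t'\<close>] evalt_in_udom[OF N \<open>wf_trm L t'\<close>] h by simp
  qed
  then have "map (inv_into (udom N) h) (map (evalt (fint (image_struct h N)) (h \<circ> s)) ts)
      = map (evalt (fint N) s) ts"
    unfolding map_map by (intro map_cong refl) (simp only: comp_apply)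
  have "sat (image_struct h N) (h \<circ> s) (Rel R ts)
      = rint (image_struct h N) R (map (evalt (fint (image_struct h N)) (h \<circ> s)) ts)"
    by (simp only: sat.simps)
  also have "\<dots> = rint N R (map (evalt (fint N) s) ts)"
    by (simp only: rint_image_struct \<open>map (inv_into (udom N) h) _ = _\<close>)
  finally show ?case by (simp only: sat.simps)
next
  case (Ex n \<phi>)
  have upd: "(h \<circ> s)(n := h b) = h \<circ> s(n := b)" for b by auto
  have "sat (image_struct h N) (h \<circ> s) (Ex n \<phi>)
      \<longleftrightarrow> (\<exists>b\<in>udom N. sat (image_struct h N) ((h \<circ> s)(n := h b)) \<phi>)"
    by (simp only: sat.simps udom_image_struct) blast
  also have "\<dots> \<longleftrightarrow> (\<exists>b\<in>udom N. sat N (s(n := b)) \<phi>)"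
    unfolding upd using Ex by (intro bex_cong refl Ex.IH) auto
  finally show ?case by (simp only: sat.simps)
qed auto

lemma sat_image_struct_inv:
  assumes N: "is_struct L N" and h: "inj_on h (udom N)"
    and "wf_fm L \<phi>" "range s \<subseteq> h ` udom N"
  shows "sat (image_struct h N) s \<phi> \<longleftrightarrow> sat N (inv_into (udom N) h \<circ> s) \<phi>"
proof -
  have "h \<circ> (inv_into (udom N) h \<circ> s) = s"
    unfolding comp_def using assms(4) by (intro ext f_inv_into_f) auto
  moreover have "range (inv_into (udom N) h \<circ> s) \<subseteq> udom N"
    using assms(4) by (auto intro!: inv_into_into simp: image_subset_iff)
  ultimately show ?thesis using sat_image_struct[OF N h assms(3)] by metis
qed

lemma is_struct_image_struct:
  assumes N: "is_struct L N" and h: "inj_on h (udom N)"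
  shows "is_struct L (image_struct h N)"
  unfolding is_struct_def
proof (intro conjI allI impI)
  show "udom (image_struct h N) \<noteq> {}" using is_struct_nonempty[OF N] by simp
next
  fix F n bs assume F: "fst L F = Some n \<and> length bs = n \<and> set bs \<subseteq> udom (image_struct h N)"
  then have "set (map (inv_into (udom N) h) bs) \<subseteq> udom N" by (auto intro: inv_into_into)
  then have "fint N F (map (inv_into (udom N) h) bs) \<in> udom N" using is_struct_fint[OF N] F by simp
  then show "fint (image_struct h N) F bs \<in> udom (image_struct h N)" by (simp add: image_struct_def)
qed

lemma atomic_model_image_struct:
  fixes N :: "('a, 'f, 'r) struct" and h :: "'a \<Rightarrow> 'a"
  assumes T: "\<forall>\<phi>\<in>T. wf_fm L \<phi>" and N: "atomic_model L T N" and h: "inj_on h (udom N)"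
  shows "atomic_model L T (image_struct h N)"
proof -
  have Ns: "is_struct L N" by (rule models_is_struct[OF atomic_model_models[OF N]])
  let ?g = "inv_into (udom N) h"
  have g: "range (?g \<circ> s) \<subseteq> udom N" if "range s \<subseteq> h ` udom N" for s :: "nat \<Rightarrow> 'a"
    using that by (auto intro!: inv_into_into simp: image_subset_iff)
  have "models L T (image_struct h N)"
    unfolding models_def
    using is_struct_image_struct[OF Ns h] sat_image_struct_inv[OF Ns h] T g
      models_sat[OF atomic_model_models[OF N]] by auto
  moreover have "\<exists>\<theta>. complete_fm TYPE('a) L T w \<theta> \<and> sat (image_struct h N) s \<theta>"
    if "distinct w" "range s \<subseteq> h ` udom N" for w s
    using atomic_model_complete_fm[OF N that(1) g[OF that(2)]]
      sat_image_struct_inv[OF Ns h _ that(2)] complete_fm_wf by blast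
  ultimately show ?thesis unfolding atomic_model_def by auto
qed

lemma elem_sub_image_struct:
  fixes M M' N' :: "('a, 'f, 'r) struct"
  assumes M: "is_struct L M" and f: "elem_emb L M M' f" and M'N': "elem_sub L M' N'"
    and h: "inj_on h (udom N')" and hf: "\<forall>a\<in>udom M. h (f a) = a"
  shows "elem_sub L M (image_struct h N')"
proof -
  have N': "is_struct L N'" using M'N' by (rule elem_sub_is_struct)
  have "elem_emb L M (image_struct h N') id"
    unfolding elem_emb_def
  proof (intro conjI ballI allI impI)
    fix a assume a: "a \<in> udom M"
    then have "f a \<in> udom N'" using elem_emb_into[OF f a] elem_sub_udom[OF M'N'] by blast
    then show "id a \<in> udom (image_struct h N')" using hf a by (metis id_apply image_eqI udom_image_struct)
  next
    fix \<phi> and s :: "nat \<Rightarrow> 'a"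
    assume "wf_fm L \<phi> \<and> range s \<subseteq> udom M"
    then have \<phi>: "wf_fm L \<phi>" and s: "range s \<subseteq> udom M" by auto
    have fs: "range (f \<circ> s) \<subseteq> udom M'" using s elem_emb_into[OF f] by auto
    then have "range (f \<circ> s) \<subseteq> udom N'" using elem_sub_udom[OF M'N'] by blast
    from sat_image_struct[OF N' h \<phi> this]
    have "sat (image_struct h N') (h \<circ> (f \<circ> s)) \<phi> = sat N' (f \<circ> s) \<phi>" .
    moreover have "s v \<in> udom M" for v using s by auto
    with hf have "h \<circ> (f \<circ> s) = id \<circ> s" by auto
    ultimately show "sat M s \<phi> = sat (image_struct h N') (id \<circ> s) \<phi>"
      using elem_sub_sat[OF M'N' \<phi> fs] elem_emb_sat[OF f \<phi> s] by simp
  qed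
  then show ?thesis by (rule elem_emb_id_imp_elem_sub[OF M is_struct_image_struct[OF N' h]])
qed

lemma inj_on_extending_inv_into:
  fixes f :: "'a \<Rightarrow> 'b"
  assumes f: "inj_on f A" and A: "countable A" and B: "countable B"
    and unc: "uncountable (UNIV :: 'a set)"
  shows "\<exists>h. inj_on h B \<and> (\<forall>a\<in>A. h (f a) = a) \<and> (\<forall>b\<in>B - f ` A. h b \<notin> A)"
proof -
  have "infinite (UNIV - A)" using uncountable_minus_countable[OF unc A] countable_finite by blast
  then obtain g :: "nat \<Rightarrow> 'a" where g: "inj g" "range g \<subseteq> UNIV - A"
    using infinite_countable_subset by blast
  define j where "j = g \<circ> to_nat_on (B - f ` A)"
  have j_inj: "inj_on j (B - f ` A)"
    unfolding j_def using B by (intro comp_inj_on inj_on_to_nat_on inj_on_subset[OF g(1)]) auto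
  have j_fresh: "j b \<notin> A" for b using g(2) by (auto simp: j_def)
  define h where "h b = (if b \<in> f ` A then inv_into A f b else j b)" for b
  have hf: "h (f a) = a" if "a \<in> A" for a using f that by (simp add: h_def)
  have "inj_on h B"
  proof (rule inj_onI)
    fix x y assume xy: "x \<in> B" "y \<in> B" "h x = h y"
    consider "x \<in> f ` A" "y \<in> f ` A" | "x \<notin> f ` A" "y \<notin> f ` A"
      | "x \<in> f ` A \<longleftrightarrow> y \<notin> f ` A" by blast
    then show "x = y"
    proof cases
      case 1
      with xy(3) show ?thesis by (auto simp: h_def intro: inv_into_injective)
    next
      case 2
      with xy show ?thesis using inj_onD[OF j_inj] by (auto simp: h_def)
    next
      case 3
      with xy(3) j_fresh show ?thesis by (auto simp: h_def inv_into_f_f[OF f])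
    qed
  qed
  moreover have "h b \<notin> A" if "b \<in> B - f ` A" for b using that j_fresh by (simp add: h_def)
  ultimately show ?thesis using hf by blast
qed

lemma elem_extension_along_emb:
  fixes M M' N' :: "('a, 'f, 'r) struct"
  assumes T: "\<forall>\<phi>\<in>T. wf_fm L \<phi>" and unc: "uncountable (UNIV :: 'a set)"
    and M: "cam L T M" and f: "elem_emb L M M' f" and M'N': "elem_sub L M' N'" and N': "cam L T N'"
  shows "\<exists>N h. atomic_model L T N \<and> elem_sub L M N \<and> h ` udom N' \<subseteq> udom N
    \<and> (\<forall>b\<in>udom N' - udom M'. h b \<notin> udom M) \<and> (\<forall>a\<in>udom M. h (f a) = a)
    \<and> (\<forall>\<phi> t. wf_fm L \<phi> \<and> range t \<subseteq> udom N' \<longrightarrow> (sat N (h \<circ> t) \<phi> \<longleftrightarrow> sat N' t \<phi>))"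
proof -
  obtain h where h: "inj_on h (udom N')" "\<forall>a\<in>udom M. h (f a) = a"
    "\<forall>b\<in>udom N' - f ` udom M. h b \<notin> udom M"
    using inj_on_extending_inv_into[OF elem_emb_inj_on[OF f] cam_countable[OF M] cam_countable[OF N'] unc]
    by blast
  have N's: "is_struct L N'" using M'N' by (rule elem_sub_is_struct)
  have "atomic_model L T (image_struct h N')"
    using atomic_model_image_struct[OF T cam_atomic_model[OF N'] h(1)] .
  moreover have "elem_sub L M (image_struct h N')"
    using elem_sub_image_struct[OF models_is_struct[OF cam_models[OF M]] f M'N' h(1,2)] .
  moreover have "f ` udom M \<subseteq> udom M'" using elem_emb_into[OF f] by blast
  then have "\<forall>b\<in>udom N' - udom M'. h b \<notin> udom M" using h(3) by blast
  ultimately show ?thesis using h(2) sat_image_struct[OF N's h(1)]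
    by (intro exI[of _ "image_struct h N'"] exI[of _ h]) auto
qed

section \<open>Extendible formulas\<close>

lemma extendibleE:
  assumes "extendible (U :: 'a itself) L T z x \<theta>"
  obtains M N :: "('a, 'f, 'r) struct" and s where "cam L T M" "cam L T N" "elem_sub L M N"
    "range s \<subseteq> udom N" "s ` set z \<subseteq> udom M" "s ` set x \<inter> udom M = {}" "sat N s \<theta>"
  using assms unfolding extendible_def by (elim exE conjE) (rule that)

lemma extendibleI:
  fixes M N :: "('a, 'f, 'r) struct"
  assumes "cam L T M" "cam L T N" "elem_sub L M N"
    "range s \<subseteq> udom N" "s ` set z \<subseteq> udom M" "s ` set x \<inter> udom M = {}" "sat N s \<theta>"
  shows "extendible (U :: 'a itself) L T z x \<theta>"
  unfolding extendible_def using assms by (intro exI[of _ M] exI[of _ N] exI[of _ s] conjI)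

lemma extendible_elem_sub:
  fixes M :: "('a, 'f, 'r) struct"
  assumes T: "\<forall>\<phi>\<in>T. wf_fm L \<phi>" and c: "complete_fm (U :: 'a itself) L T (z @ x) \<theta>"
    and ext: "extendible U L T z x \<theta>"
    and M: "cam L T M" and s: "range s \<subseteq> udom M" "sat M s \<theta>"
  shows "\<exists>M0. cam L T M0 \<and> elem_sub L M0 M \<and> s ` set z \<subseteq> udom M0 \<and> s ` set x \<inter> udom M0 = {}"
proof -
  obtain M' N' :: "('a, 'f, 'r) struct" and s' where ext': "cam L T M'" "cam L T N'" "elem_sub L M' N'"
    "range s' \<subseteq> udom N'" "s' ` set z \<subseteq> udom M'" "s' ` set x \<inter> udom M' = {}" "sat N' s' \<theta>"
    using ext by (rule extendibleE)
  have "same_type L N' s' M s (set (z @ x))"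
    using complete_fm_same_type[OF c cam_models[OF ext'(2)] ext'(4,7) cam_models[OF M] s] .
  then obtain M0 where M0: "cam L T M0" "elem_sub L M0 M"
      "\<forall>v\<in>set (z @ x). s v \<in> udom M0 \<longleftrightarrow> s' v \<in> udom M'"
    using elem_sub_transfer[OF T ext'(2,3) cam_countable[OF ext'(1)] cam_atomic_model[OF M] _ ext'(4) s(1)]
    by blast
  moreover have "s ` set z \<subseteq> udom M0" using M0(3) ext'(5) by auto
  moreover have "s ` set x \<inter> udom M0 = {}" using M0(3) ext'(6) by auto
  ultimately show ?thesis by blast
qed

lemma extendible_restr:
  fixes U :: "'a itself" and L :: "('f, 'r) lang"
  assumes ext: "extendible U L T z x \<theta>" and "subseq z' z" "subseq x' x"
  shows "extendible U L T z' x' (restr (z @ x) (z' @ x') \<theta>)"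
  using ext
proof (rule extendibleE)
  fix M N :: "('a, 'f, 'r) struct" and s
  assume "cam L T M" "cam L T N" "elem_sub L M N" "range s \<subseteq> udom N"
    "s ` set z \<subseteq> udom M" "s ` set x \<inter> udom M = {}" "sat N s \<theta>"
  moreover have "set z' \<subseteq> set z" "set x' \<subseteq> set x"
    using assms(2,3) by (auto elim: list_emb_set)
  ultimately show ?thesis
    unfolding restr_def by (intro extendibleI[where M = M and N = N and s = s] sat_exs_self) blast+
qed

lemma extendible_realized_outside:
  fixes M :: "('a, 'f, 'r) struct"
  assumes T: "\<forall>\<phi>\<in>T. wf_fm L \<phi>" and unc: "uncountable (UNIV :: 'a set)"
    and c: "complete_fm (U :: 'a itself) L T (z @ [y]) \<psi>" and y: "y \<notin> set z"
    and ext: "extendible U L T z [y] \<psi>"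
    and M: "cam L T M" and s: "range s \<subseteq> udom M" "sat M s (Ex y \<psi>)"
  shows "\<exists>N c. atomic_model L T N \<and> elem_sub L M N \<and> c \<in> udom N - udom M \<and> sat N (s(y := c)) \<psi>"
proof -
  obtain M' N' :: "('a, 'f, 'r) struct" and s' where ext': "cam L T M'" "cam L T N'" "elem_sub L M' N'"
    "range s' \<subseteq> udom N'" "s' ` set z \<subseteq> udom M'" "s' y \<notin> udom M'" "sat N' s' \<psi>"
    using ext by (rule extendibleE) auto
  have cE: "complete_fm U L T z (Ex y \<psi>)"
    using complete_fm_exs[OF c, of z "[y]"] y by auto
  have "sat N' s' (Ex y \<psi>)" using sat_exs_self[OF ext'(4,7), of "[y]"] by simp
  then obtain t' where t': "range t' \<subseteq> udom M'" "\<forall>v\<in>set z. t' v = s' v" "sat M' t' (Ex y \<psi>)"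
    by (rule elem_sub_realization[OF ext'(3) complete_fm_wf[OF cE] complete_fm_fv[OF cE] ext'(5)])
  \<comment> \<open>embed \<open>M\<close> into \<open>M'\<close> over the \<open>z\<close>-part, then pull \<open>N' \<succeq> M'\<close> back to an extension of \<open>M\<close>\<close>
  then obtain f where f: "elem_emb L M M' f" "\<forall>v\<in>set z. f (s v) = t' v"
    using cam_elem_emb[OF M cam_models[OF ext'(1)] _ s(1) t'(1)]
      complete_fm_same_type[OF cE cam_models[OF M] s cam_models[OF ext'(1)] t'(1)] by blast
  obtain N h where N: "atomic_model L T N" "elem_sub L M N" "h ` udom N' \<subseteq> udom N"
    "\<forall>b\<in>udom N' - udom M'. h b \<notin> udom M" "\<forall>a\<in>udom M. h (f a) = a"
    "\<And>\<phi> t. wf_fm L \<phi> \<Longrightarrow> range t \<subseteq> udom N' \<Longrightarrow> sat N (h \<circ> t) \<phi> \<longleftrightarrow> sat N' t \<phi>"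
    using elem_extension_along_emb[OF T unc M f(1) ext'(3,2)] by blast
  have "s' y \<in> udom N'" using ext'(4) by auto
  then have new: "h (s' y) \<in> udom N - udom M" using N(3,4) ext'(6) by blast
  have "sat N (h \<circ> s') \<psi>" using N(6)[OF complete_fm_wf[OF c] ext'(4)] ext'(7) by simp
  moreover have "(h \<circ> s') v = (s(y := h (s' y))) v" if "v \<in> fv_fm \<psi>" for v
  proof (cases "v = y")
    case False
    with that complete_fm_fv[OF c] have "v \<in> set z" by auto
    moreover have "s v \<in> udom M" using s(1) by auto
    ultimately show ?thesis using False f(2) t'(2) N(5) by force
  qed simp
  ultimately have "sat N (s(y := h (s' y))) \<psi>" using sat_cong by blast
  with N(1,2) new show ?thesis by blast
qed

lemma not_pseudo_algE:
  fixes M :: "('a, 'f, 'r) struct"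
  assumes "\<not> pseudo_alg (U :: 'a itself) L T z y \<psi>"
    and "cam L T M" "range s \<subseteq> udom M" "sat M s (Ex y \<psi>)"
  obtains N :: "('a, 'f, 'r) struct" where "atomic_model L T N" "elem_sub L M N" "udom N \<noteq> udom M"
    "{c \<in> udom N. sat N (s(y := c)) \<psi>} \<noteq> {c \<in> udom M. sat M (s(y := c)) \<psi>}"
  using assms unfolding pseudo_alg_def by (meson that)

lemma extendible_not_pseudo_alg:
  fixes U :: "'a itself" and L :: "('f, 'r) lang"
  assumes T: "\<forall>\<phi>\<in>T. wf_fm L \<phi>" and unc: "uncountable (UNIV :: 'a set)"
    and dist: "distinct (z @ x)" and c: "complete_fm U L T (z @ x) \<theta>"
    and ext: "extendible U L T z x \<theta>" and xi: "xi \<in> set x"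
  shows "\<not> pseudo_alg U L T z xi (restr (z @ x) (z @ [xi]) \<theta>)"
proof
  let ?\<psi> = "restr (z @ x) (z @ [xi]) \<theta>"
  assume "pseudo_alg U L T z xi ?\<psi>"
  then obtain M :: "('a, 'f, 'r) struct" and s where M: "cam L T M" "range s \<subseteq> udom M" "sat M s (Ex xi ?\<psi>)"
    and alg: "\<forall>N :: ('a, 'f, 'r) struct. atomic_model L T N \<and> elem_sub L M N \<and> udom N \<noteq> udom M
      \<longrightarrow> {c \<in> udom N. sat N (s(xi := c)) ?\<psi>} = {c \<in> udom M. sat M (s(xi := c)) ?\<psi>}"
    unfolding pseudo_alg_def by (elim exE conjE) (rule that; assumption)
  have "complete_fm U L T (z @ [xi]) ?\<psi>" using complete_fm_restr[OF c] xi by auto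
  moreover have "extendible U L T z [xi] ?\<psi>"
    using extendible_restr[OF ext] xi by (simp add: subseq_singleton_left)
  moreover have "xi \<notin> set z" using dist xi by auto
  ultimately obtain N c where N: "atomic_model L T N" "elem_sub L M N"
    and c: "c \<in> udom N - udom M" "sat N (s(xi := c)) ?\<psi>"
    using extendible_realized_outside[OF T unc _ _ _ M] by blast
  then have "udom N \<noteq> udom M" by blast
  then have "{c \<in> udom N. sat N (s(xi := c)) ?\<psi>} = {c \<in> udom M. sat M (s(xi := c)) ?\<psi>}"
    by (intro alg[rule_format] conjI N)
  with c show False by blast
qed

lemma not_pseudo_alg_elem_sub_avoiding:
  fixes L :: "('f :: countable, 'r :: countable) lang" and M1 :: "('a, 'f, 'r) struct"
  assumes T: "\<forall>\<phi>\<in>T. wf_fm L \<phi>" and c: "complete_fm (U :: 'a itself) L T (z @ [y]) \<psi>"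
    and y: "y \<notin> set z" and npa: "\<not> pseudo_alg U L T z y \<psi>"
    and M1: "cam L T M1" and s: "range s \<subseteq> udom M1" "sat M1 s \<psi>"
  shows "\<exists>M2. cam L T M2 \<and> elem_sub L M2 M1 \<and> s ` set z \<subseteq> udom M2 \<and> s y \<notin> udom M2"
proof -
  have wf: "wf_fm L \<psi>" by (rule complete_fm_wf[OF c])
  have "sat M1 s (Ex y \<psi>)" using s by (auto intro!: bexI[of _ "s y"])
  then obtain N where N: "atomic_model L T N" "elem_sub L M1 N"
    "{c \<in> udom N. sat N (s(y := c)) \<psi>} \<noteq> {c \<in> udom M1. sat M1 (s(y := c)) \<psi>}"
    using npa M1 s(1) by (elim not_pseudo_algE)
  have old: "sat M1 (s(y := c)) \<psi> \<longleftrightarrow> sat N (s(y := c)) \<psi>" if "c \<in> udom M1" for c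
  proof -
    have "range (s(y := c)) \<subseteq> udom M1" using s(1) that by auto
    then show ?thesis by (rule elem_sub_sat[OF N(2) wf])
  qed
  \<comment> \<open>\<open>\<psi>(M1) \<subseteq> \<psi>(N)\<close> by elementarity, so the two sets differ by a realization outside \<open>M1\<close>\<close>
  then obtain c where c_new: "c \<in> udom N - udom M1" "sat N (s(y := c)) \<psi>"
    using N(3) elem_sub_udom[OF N(2)] by blast
  have "insert c (udom M1) \<subseteq> udom N" "countable (insert c (udom M1))"
    using c_new elem_sub_udom[OF N(2)] cam_countable[OF M1] by auto
  then obtain N0 where N0: "cam L T N0" "elem_sub L N0 N" "insert c (udom M1) \<subseteq> udom N0"
    using downward_LS_cam[OF T N(1)] by blast
  have M1N0: "elem_sub L M1 N0" using elem_sub_between[OF N(2) N0(2)] N0(3) by blast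
  have sA: "range (s(y := c)) \<subseteq> udom N0" using s(1) N0(3) by auto
  then have "sat N0 (s(y := c)) \<psi>" using c_new(2) elem_sub_sat[OF N0(2) wf] by blast
  then have "same_type L N0 (s(y := c)) M1 s (set (z @ [y]))"
    using complete_fm_same_type[OF c cam_models[OF N0(1)] sA _ cam_models[OF M1] s] by blast
  then obtain M2 where M2: "cam L T M2" "elem_sub L M2 M1"
      "\<forall>v\<in>set (z @ [y]). s v \<in> udom M2 \<longleftrightarrow> (s(y := c)) v \<in> udom M1"
    using elem_sub_transfer[OF T N0(1) M1N0 cam_countable[OF M1] cam_atomic_model[OF M1] _ sA s(1)]
    by blast
  have "s v \<in> udom M2" if "v \<in> set z" for v
  proof -
    have "(s(y := c)) v \<in> udom M1" using s(1) y that by auto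
    then show ?thesis using M2(3) that by simp
  qed
  moreover have "s y \<notin> udom M2" using M2(3) c_new(1) by auto
  ultimately show ?thesis using M2(1,2) by blast
qed

lemma not_pseudo_alg_extendible:
  fixes L :: "('f :: countable, 'r :: countable) lang" and U :: "'a itself"
  assumes T: "complete_theory U L T" and M: "atomic_model L T (M :: ('a, 'f, 'r) struct)"
    and dist: "distinct (z @ x)" and c: "complete_fm U L T (z @ x) \<theta>"
    and npa: "\<forall>xi\<in>set x. \<not> pseudo_alg U L T z xi (restr (z @ x) (z @ [xi]) \<theta>)"
  shows "extendible U L T z x \<theta>"
proof -
  have T_wf: "\<forall>\<phi>\<in>T. wf_fm L \<phi>" using T by (rule complete_theory_wf)
  obtain M0 :: "('a, 'f, 'r) struct" and s0 where M0: "cam L T M0" "range s0 \<subseteq> udom M0" "sat M0 s0 \<theta>"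
    using complete_fm_realized_in_cam[OF T M c] by blast
  have avoid: "\<exists>M'. cam L T M' \<and> elem_sub L M' M0 \<and> s0 ` set z \<subseteq> udom M' \<and> s0 ` J \<inter> udom M' = {}"
    if "finite J" "J \<subseteq> set x" for J
    using that
  proof (induction J rule: finite_induct)
    case empty
    then show ?case using M0(1,2) elem_sub_refl[OF models_is_struct[OF cam_models[OF M0(1)]]] by auto
  next
    case (insert j J)
    have "J \<subseteq> set x" using insert.prems by blast
    then obtain M1 where M1: "cam L T M1" "elem_sub L M1 M0" "s0 ` set z \<subseteq> udom M1"
      "s0 ` J \<inter> udom M1 = {}"
      using insert.IH[OF \<open>J \<subseteq> set x\<close>] by blast
    show ?case
    proof (cases "s0 j \<in> udom M1")
      case True
      let ?\<psi> = "restr (z @ x) (z @ [j]) \<theta>"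
      have j: "j \<in> set x" "j \<notin> set z" using insert.prems dist by auto
      have c\<psi>: "complete_fm U L T (z @ [j]) ?\<psi>" using complete_fm_restr[OF c] j(1) by auto
      have "s0 ` set (z @ [j]) \<subseteq> udom M1" using True M1(3) by auto
      moreover have "sat M0 s0 ?\<psi>" unfolding restr_def using M0(2,3) by (rule sat_exs_self)
      ultimately obtain s1 where s1: "range s1 \<subseteq> udom M1" "\<forall>v\<in>set (z @ [j]). s1 v = s0 v"
        "sat M1 s1 ?\<psi>"
        by (rule elem_sub_realization[OF M1(2) complete_fm_wf[OF c\<psi>] complete_fm_fv[OF c\<psi>]])
      obtain M2 where M2: "cam L T M2" "elem_sub L M2 M1" "s1 ` set z \<subseteq> udom M2" "s1 j \<notin> udom M2"
        using not_pseudo_alg_elem_sub_avoiding[OF T_wf c\<psi> j(2) _ M1(1) s1(1,3)] npa j(1) by blast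
      have "s0 ` set z \<subseteq> udom M2" using M2(3) s1(2) by auto
      moreover have "s0 ` insert j J \<inter> udom M2 = {}"
        using M2(4) s1(2) M1(4) elem_sub_udom[OF M2(2)] by auto
      ultimately show ?thesis using M2(1) elem_sub_trans[OF M2(2) M1(2)] by blast
    next
      case False
      then have "s0 ` insert j J \<inter> udom M1 = {}" using M1(4) by auto
      with M1(1-3) show ?thesis by blast
    qed
  qed
  obtain M' where "cam L T M'" "elem_sub L M' M0" "s0 ` set z \<subseteq> udom M'" "s0 ` set x \<inter> udom M' = {}"
    using avoid[OF finite_set subset_refl] by blast
  then show ?thesis using M0 by (intro extendibleI)
qed

theorem fact3p2p3:
  fixes L :: "('f :: countable, 'r :: countable) lang"
    and T :: "('f, 'r) fm set"
    and U :: "'a itself"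
  assumes compl: "complete_theory U L T"
    and unc: "\<exists>M :: ('a, 'f, 'r) struct. atomic_model L T M \<and> uncountable (udom M)"
  shows
    "(\<forall>z x \<theta>. partition_ok z x \<theta> \<and> complete_fm U L T (z @ x) \<theta> \<and> extendible U L T z x \<theta> \<longrightarrow>
        (\<forall>(M :: ('a, 'f, 'r) struct) s. cam L T M \<and> range s \<subseteq> udom M \<and> sat M s \<theta> \<longrightarrow>
           (\<exists>M0. elem_sub L M0 M \<and> s ` set z \<subseteq> udom M0 \<and> s ` set x \<inter> udom M0 = {})))
   \<and> (\<forall>z x z' x' \<theta>. partition_ok z x \<theta> \<and> complete_fm U L T (z @ x) \<theta> \<and> extendible U L T z x \<theta>
        \<and> subseq z' z \<and> subseq x' x \<longrightarrow>
        extendible U L T z' x' (restr (z @ x) (z' @ x') \<theta>))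
   \<and> (\<forall>z x \<theta>. partition_ok z x \<theta> \<and> complete_fm U L T (z @ x) \<theta> \<longrightarrow>
        (extendible U L T z x \<theta> \<longleftrightarrow>
          (\<forall>xi\<in>set x. \<not> pseudo_alg U L T z xi (restr (z @ x) (z @ [xi]) \<theta>))))"
proof -
  have T: "\<forall>\<phi>\<in>T. wf_fm L \<phi>" using compl by (rule complete_theory_wf)
  obtain M :: "('a, 'f, 'r) struct" where M: "atomic_model L T M" "uncountable (udom M)"
    using unc by blast
  have unc_type: "uncountable (UNIV :: 'a set)"
    using M(2) countable_subset[of "udom M" UNIV] by auto
  show ?thesis
  proof (intro conjI allI impI)
    fix z x \<theta> and N :: "('a, 'f, 'r) struct" and s
    assume "partition_ok z x \<theta> \<and> complete_fm U L T (z @ x) \<theta> \<and> extendible U L T z x \<theta>"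
      and "cam L T N \<and> range s \<subseteq> udom N \<and> sat N s \<theta>"
    then show "\<exists>M0. elem_sub L M0 N \<and> s ` set z \<subseteq> udom M0 \<and> s ` set x \<inter> udom M0 = {}"
      using extendible_elem_sub[OF T, where M = N and s = s and z = z and x = x and U = U and \<theta> = \<theta>]
      by blast
  next
    fix z x z' x' \<theta>
    assume "partition_ok z x \<theta> \<and> complete_fm U L T (z @ x) \<theta> \<and> extendible U L T z x \<theta>
      \<and> subseq z' z \<and> subseq x' x"
    then show "extendible U L T z' x' (restr (z @ x) (z' @ x') \<theta>)" by (elim conjE) (rule extendible_restr)
  next
    fix z x \<theta> assume "partition_ok z x \<theta> \<and> complete_fm U L T (z @ x) \<theta>"
    then show "extendible U L T z x \<theta> \<longleftrightarrow>
        (\<forall>xi\<in>set x. \<not> pseudo_alg U L T z xi (restr (z @ x) (z @ [xi]) \<theta>))"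
      using extendible_not_pseudo_alg[OF T unc_type, where z = z and x = x]
        not_pseudo_alg_extendible[OF compl M(1), where z = z and x = x]
      unfolding partition_ok_def by auto
  qed
qed

end
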